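(* Let $1\le p<2$ and let $(X_n)$ be a determining sequence with $\sup_n\|X_n\|_p<\infty$, $\{|X_n|^p\}$ uniformly integrable, $X_n\to0$ weakly in $L^p$, and limit random measure $\mu$. Suppose that for every increasing sequence $(m_k)$ of positive integers, $\sup_{N\ge1}\|N^{-1/2}\sum_{k=1}^NX_{m_k}\|_p<\infty$. Then $\int_{-\infty}^\infty x^2\,d\mu(x)<\infty$ almost surely.
   Context: Determining sequence: for every $A\in\mathcal F$ with $P(A)>0$ there is a distribution function $F_A$ with $P(X_n\le t\mid A)\to F_A(t)$ at every continuity point $t$ of $F_A$. The limit random measure $\mu$ is a random probability measure on $\mathbb R$ (measurable w.r.t. the Prohorov metric) with $F_A(t)=P(A)^{-1}\int_A\mu(-\infty,t]\,dP$ for every such $A$ and continuity point $t$ of $F_A$. *)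

theory Defs
  imports "HOL-Probability.Probability"
begin

definition Lp_pow :: "'a measure \<Rightarrow> real \<Rightarrow> ('a \<Rightarrow> real) \<Rightarrow> ennreal" where
  "Lp_pow M p f = (\<integral>\<^sup>+ x. ennreal (\<bar>f x\<bar> powr p) \<partial>M)"

definition in_Lp :: "'a measure \<Rightarrow> ereal \<Rightarrow> ('a \<Rightarrow> real) \<Rightarrow> bool" where
  "in_Lp M q g \<longleftrightarrow> g \<in> borel_measurable M \<and>
     (if q = \<infinity> then (\<exists>B. AE x in M. \<bar>g x\<bar> \<le> B)
      else Lp_pow M (real_of_ereal q) g < \<infinity>)"

definition conj_exp :: "real \<Rightarrow> ereal" where
  "conj_exp p = (if p = 1 then \<infinity> else ereal (p / (p - 1)))"

definition weak_Lp_to_zero :: "'a measure \<Rightarrow> real \<Rightarrow> (nat \<Rightarrow> 'a \<Rightarrow> real) \<Rightarrow> bool" where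
  "weak_Lp_to_zero M p X \<longleftrightarrow>
     (\<forall>g. in_Lp M (conj_exp p) g \<longrightarrow>
        ((\<lambda>n. \<integral>x. X n x * g x \<partial>M) \<longlonglongrightarrow> 0))"

definition unif_integrable :: "'a measure \<Rightarrow> (nat \<Rightarrow> 'a \<Rightarrow> real) \<Rightarrow> bool" where
  "unif_integrable M Y \<longleftrightarrow> (\<forall>n. Y n \<in> borel_measurable M) \<and>
     (\<forall>e>0. \<exists>K. \<forall>n.
        (\<integral>\<^sup>+ x. ennreal \<bar>Y n x\<bar> * indicator {y \<in> space M. \<bar>Y n y\<bar> > K} x \<partial>M) < ennreal e)"

definition distribution_function :: "(real \<Rightarrow> real) \<Rightarrow> bool" where
  "distribution_function F \<longleftrightarrow> mono F \<and> (\<forall>t. continuous (at_right t) F) \<and>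
     (F \<longlongrightarrow> 0) at_bot \<and> (F \<longlongrightarrow> 1) at_top"

definition cond_limit_df ::
  "'a measure \<Rightarrow> (nat \<Rightarrow> 'a \<Rightarrow> real) \<Rightarrow> 'a set \<Rightarrow> (real \<Rightarrow> real) \<Rightarrow> bool" where
  "cond_limit_df M X A F \<longleftrightarrow> distribution_function F \<and>
     (\<forall>t. isCont F t \<longrightarrow>
        ((\<lambda>n. measure M ({x \<in> space M. X n x \<le> t} \<inter> A) / measure M A) \<longlonglongrightarrow> F t))"

definition determining :: "'a measure \<Rightarrow> (nat \<Rightarrow> 'a \<Rightarrow> real) \<Rightarrow> bool" where
  "determining M X \<longleftrightarrow> (\<forall>n. X n \<in> borel_measurable M) \<and>
     (\<forall>A \<in> sets M. measure M A > 0 \<longrightarrow> (\<exists>F. cond_limit_df M X A F))"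

text \<open>Limit random measure: a measurable map into probability measures on the
  real line (Giry monad sigma-algebra) representing every F_A.\<close>
definition limit_random_measure ::
  "'a measure \<Rightarrow> (nat \<Rightarrow> 'a \<Rightarrow> real) \<Rightarrow> ('a \<Rightarrow> real measure) \<Rightarrow> bool" where
  "limit_random_measure M X \<mu> \<longleftrightarrow> \<mu> \<in> M \<rightarrow>\<^sub>M prob_algebra borel \<and>
     (\<forall>A \<in> sets M. measure M A > 0 \<longrightarrow> (\<forall>F. cond_limit_df M X A F \<longrightarrow>
        (\<forall>t. isCont F t \<longrightarrow>
           F t = (\<integral>x. indicator A x * measure (\<mu> x) {..t} \<partial>M) / measure M A)))"

end

theory Submission
  imports Defs
begin

text \<open>
  Suppose the second moment of \<open>\<mu>\<close> is infinite on a set of positive probability. Truncating \<open>y\<^sup>2\<close>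
  at level \<open>T\<close>, the moments \<open>g\<^sub>T = \<integral> min (y\<^sup>2) T d\<mu>\<close> then blow up on that set, so
  \<open>E [g\<^sub>T / sqrt (g\<^sub>T + 1)]\<close> is unbounded in \<open>T\<close>. Since the conditional laws of \<open>X\<^sub>n\<close> converge
  to mixtures of \<open>\<mu>\<close>, integrals of \<open>min (X\<^sub>n\<^sup>2) T\<close> against bounded functions of \<open>g\<^sub>T\<close> converge to
  the corresponding integrals of \<open>g\<^sub>T\<close>; along a suitable subsequence this holds for the first
  moments and, approximately, for the products of distinct terms. The minorant
  \<open>sqrt z \<ge> 3 z / (2 sqrt S) - z\<^sup>2 / (2 S sqrt S)\<close> with \<open>S = N (g\<^sub>T + 1)\<close> turns these moments into
  \<open>E sqrt (\<Sum>k<N. min (X\<^sub>s\<^sub>k\<^sup>2) T) \<ge> sqrt N * (E [g\<^sub>T / sqrt (g\<^sub>T + 1)] - 1)\<close>. A Khintchine-type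
  inequality for random signs converts this into finite index sets \<open>F\<close> with
  \<open>E \<bar>\<Sum>n\<in>F. X\<^sub>n\<bar> \<ge> K sqrt (card F)\<close> for arbitrarily large \<open>K\<close>. Concatenating such blocks, each
  dominating everything before it, yields an increasing sequence \<open>m\<close> whose normalised partial
  sums are unbounded in \<open>L\<^sup>1\<close>, hence in \<open>L\<^sup>p\<close>.
\<close>

section \<open>Elementary inequalities\<close>

lemma sqrt_ge_quadratic_minorant:
  fixes z S :: real
  assumes "0 \<le> z" "0 < S"
  shows "3 * z / (2 * sqrt S) - z\<^sup>2 / (2 * S * sqrt S) \<le> sqrt z"
proof -
  define u v where "u = sqrt z" and "v = sqrt S"
  have uv: "0 \<le> u" "0 < v" "z = u\<^sup>2" "S = v\<^sup>2"
    using assms by (auto simp: u_def v_def)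
  have "0 \<le> u * (u - v)\<^sup>2 * (u + 2 * v)" using uv by simp
  then have "3 * u\<^sup>2 * v\<^sup>2 - u ^ 4 \<le> 2 * u * v ^ 3"
    by (simp add: power2_eq_square power3_eq_cube power4_eq_xxxx algebra_simps)
  then show ?thesis
    using uv by (simp add: u_def[symmetric] v_def[symmetric] field_simps power2_eq_square
        power3_eq_cube power4_eq_xxxx)
qed

lemma divide_sqrt_succ_le:
  fixes z g :: real
  assumes "0 \<le> z" "0 \<le> g"
  shows "z / sqrt (g + 1) \<le> z"
  using assms by (auto simp: divide_le_eq mult_le_cancel_left1)

lemma sqrt_minus_one_le_div_sqrt:
  fixes x :: real
  assumes "0 \<le> x"
  shows "sqrt x - 1 \<le> x / sqrt (x + 1)"
proof -
  have "sqrt (x + 1) \<le> sqrt x + 1"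
    using assms by (intro real_le_lsqrt) (auto simp: power2_eq_square algebra_simps)
  then have "(sqrt x - 1) * sqrt (x + 1) \<le> x"
    using assms
    by (cases "sqrt x \<le> 1")
       (auto intro: order_trans[OF mult_nonpos_nonneg] order_trans[OF mult_left_mono]
         simp: algebra_simps)
  then show ?thesis using assms by (simp add: field_simps)
qed

lemma right_continuous_eq_off_countable:
  fixes F G :: "real \<Rightarrow> real"
  assumes "\<And>t. continuous (at_right t) F" "\<And>t. continuous (at_right t) G"
    and "countable D" and "\<And>s. s \<notin> D \<Longrightarrow> F s = G s"
  shows "F = G"
proof
  fix t
  show "F t = G t"
  proof (rule ccontr)
    assume ne: "F t \<noteq> G t"
    define e where "e = \<bar>F t - G t\<bar> / 2"
    have e: "e > 0" using ne by (simp add: e_def)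
    have "\<forall>\<^sub>F s in at_right t. dist (F s) (F t) < e"
      using assms(1)[of t] e unfolding continuous_within tendsto_iff by auto
    moreover have "\<forall>\<^sub>F s in at_right t. dist (G s) (G t) < e"
      using assms(2)[of t] e unfolding continuous_within tendsto_iff by auto
    ultimately have "\<forall>\<^sub>F s in at_right t. dist (F s) (F t) < e \<and> dist (G s) (G t) < e"
      by (rule eventually_conj)
    then obtain b where b: "b > t" "\<And>s. t < s \<Longrightarrow> s < b \<Longrightarrow> dist (F s) (F t) < e \<and> dist (G s) (G t) < e"
      unfolding eventually_at_right_field by auto
    obtain s where s: "s \<in> {t<..<b}" "s \<notin> D"
      using open_minus_countable[OF assms(3), of "{t<..<b}"] b by auto
    then have "\<bar>F s - F t\<bar> < e" "\<bar>G s - G t\<bar> < e" using b by (auto simp: dist_real_def)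
    moreover have "F s = G s" using s assms(4) by auto
    ultimately have "\<bar>F t - G t\<bar> < 2 * e" by linarith
    then show False by (simp add: e_def)
  qed
qed

lemma tendsto_uniform_approx:
  fixes a :: "nat \<Rightarrow> real"
  assumes "\<And>k n. \<bar>a n - b k n\<bar> \<le> e k" "\<And>k. b k \<longlonglongrightarrow> L' k"
    "\<And>k. \<bar>L' k - L\<bar> \<le> e k" "e \<longlonglongrightarrow> 0"
  shows "a \<longlonglongrightarrow> L"
proof (rule LIMSEQ_I)
  fix r :: real assume r: "0 < r"
  obtain k where k: "\<bar>e k\<bar> < r / 3"
    using LIMSEQ_D[OF assms(4), of "r/3"] r by auto
  obtain n0 where n0: "\<And>n. n \<ge> n0 \<Longrightarrow> norm (b k n - L' k) < r / 3"
    using LIMSEQ_D[OF assms(2)[of k], of "r/3"] r by auto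
  show "\<exists>no. \<forall>n\<ge>no. norm (a n - L) < r"
  proof (intro exI allI impI)
    fix n assume "n \<ge> n0"
    then have "\<bar>b k n - L' k\<bar> < r/3" using n0 by auto
    moreover have "\<bar>a n - b k n\<bar> \<le> e k" "\<bar>L' k - L\<bar> \<le> e k" using assms by auto
    ultimately show "norm (a n - L) < r" using k unfolding real_norm_def abs_le_iff abs_less_iff by linarith
  qed
qed

section \<open>A Khintchine-type lower bound\<close>

primrec sign_average :: "nat \<Rightarrow> (nat \<Rightarrow> real) \<Rightarrow> (real \<Rightarrow> real) \<Rightarrow> real \<Rightarrow> real" where
  "sign_average 0 a \<Phi> x = \<Phi> x"
| "sign_average (Suc n) a \<Phi> x = (sign_average n a \<Phi> (x + a n) + sign_average n a \<Phi> (x - a n)) / 2"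

lemma sign_average_mono: "(\<And>y. \<Phi> y \<le> \<Psi> y) \<Longrightarrow> sign_average n a \<Phi> x \<le> sign_average n a \<Psi> x"
  by (induction n arbitrary: x) (auto intro: add_mono divide_right_mono)

lemma sign_average_nonneg: "(\<And>y. 0 \<le> \<Phi> y) \<Longrightarrow> 0 \<le> sign_average n a \<Phi> x"
  by (induction n arbitrary: x) auto

lemma sign_average_linear:
  "sign_average n a (\<lambda>y. c * \<Phi> y + d * \<Psi> y) x = c * sign_average n a \<Phi> x + d * sign_average n a \<Psi> x"
  by (induction n arbitrary: x) (simp_all add: field_simps)

lemma sign_average_square: "sign_average n a (\<lambda>y. y\<^sup>2) x = x\<^sup>2 + (\<Sum>k<n. (a k)\<^sup>2)"
  by (induction n arbitrary: x) (simp_all add: power2_eq_square field_simps)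

lemma sign_average_fourth_le:
  "sign_average n a (\<lambda>y. y ^ 4) x \<le> x ^ 4 + 6 * x\<^sup>2 * (\<Sum>k<n. (a k)\<^sup>2) + 3 * (\<Sum>k<n. (a k)\<^sup>2)\<^sup>2"
proof (induction n arbitrary: x)
  case (Suc n)
  define Q where "Q = (\<Sum>k<n. (a k)\<^sup>2)"
  have "sign_average (Suc n) a (\<lambda>y. y ^ 4) x
      \<le> ((x + a n) ^ 4 + 6 * (x + a n)\<^sup>2 * Q + 3 * Q\<^sup>2 + ((x - a n) ^ 4 + 6 * (x - a n)\<^sup>2 * Q + 3 * Q\<^sup>2)) / 2"
    using Suc[of "x + a n"] Suc[of "x - a n"] by (simp add: Q_def)
  also have "\<dots> = x ^ 4 + 6 * x\<^sup>2 * (Q + (a n)\<^sup>2) + 3 * (Q + (a n)\<^sup>2)\<^sup>2 - 2 * (a n) ^ 4"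
    by (simp add: power2_eq_square power4_eq_xxxx algebra_simps)
  also have "\<dots> \<le> x ^ 4 + 6 * x\<^sup>2 * (Q + (a n)\<^sup>2) + 3 * (Q + (a n)\<^sup>2)\<^sup>2"
    by simp
  finally show ?case by (simp add: Q_def)
qed simp

text \<open>\<open>\<bar>y\<bar>\<close> dominates a polynomial in \<open>y\<^sup>2\<close> whose sign average involves only the second and
  fourth moments, which are explicit.\<close>
lemma khintchine_lower_bound: "sqrt (\<Sum>k<n. (a k)\<^sup>2) / sqrt 3 \<le> sign_average n a abs 0"
proof (cases "(\<Sum>k<n. (a k)\<^sup>2) = 0")
  case True
  then show ?thesis by (simp add: sign_average_nonneg)
next
  case False
  define Q where "Q = (\<Sum>k<n. (a k)\<^sup>2)"
  define S where "S = 3 * Q"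
  have S: "S > 0" using False by (simp add: S_def Q_def less_le sum_nonneg)
  define c d where "c = 3 / (2 * sqrt S)" and "d = - 1 / (2 * S * sqrt S)"
  have minorant: "c * y\<^sup>2 + d * y ^ 4 \<le> \<bar>y\<bar>" for y
    using sqrt_ge_quadratic_minorant[of "y\<^sup>2" S] S by (simp add: c_def d_def power2_eq_square power4_eq_xxxx)
  have "sqrt Q / sqrt 3 = c * Q + d * (3 * Q\<^sup>2)"
    using S by (simp add: c_def d_def S_def real_sqrt_mult field_simps power2_eq_square)
  also have "\<dots> \<le> c * Q + d * sign_average n a (\<lambda>y. y ^ 4) 0"
    using sign_average_fourth_le[of n a 0] S
    by (intro add_left_mono mult_left_mono_neg) (auto simp: d_def Q_def)
  also have "\<dots> = sign_average n a (\<lambda>y. c * y\<^sup>2 + d * y ^ 4) 0"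
    by (simp add: sign_average_linear sign_average_square Q_def)
  also have "\<dots> \<le> sign_average n a abs 0"
    by (rule sign_average_mono[OF minorant])
  finally show ?thesis by (simp add: Q_def)
qed

lemma integrable_sign_average:
  fixes Y :: "nat \<Rightarrow> 'a \<Rightarrow> real"
  assumes "\<And>k. integrable M (Y k)" "integrable M x"
  shows "integrable M (\<lambda>\<omega>. sign_average n (\<lambda>k. Y k \<omega>) abs (x \<omega>))"
  using assms(2)
proof (induction n arbitrary: x)
  case (Suc n)
  have "integrable M (\<lambda>\<omega>. x \<omega> + Y n \<omega>)" "integrable M (\<lambda>\<omega>. x \<omega> - Y n \<omega>)"
    using Suc.prems assms(1) by auto
  with Suc.IH show ?case by simp
qed simp

lemma exists_signs_integral_sign_average_le:
  fixes Y :: "nat \<Rightarrow> 'a \<Rightarrow> real"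
  assumes Y: "\<And>k. integrable M (Y k)" and "integrable M x"
  shows "\<exists>\<epsilon>. (\<forall>k. \<epsilon> k = 1 \<or> \<epsilon> k = -1) \<and>
     (\<integral>\<omega>. sign_average n (\<lambda>k. Y k \<omega>) abs (x \<omega>) \<partial>M) \<le> (\<integral>\<omega>. \<bar>x \<omega> + (\<Sum>k<n. \<epsilon> k * Y k \<omega>)\<bar> \<partial>M)"
  using assms(2)
proof (induction n arbitrary: x)
  case 0
  show ?case by (intro exI[of _ "\<lambda>_. 1"]) simp
next
  case (Suc n)
  let ?I = "\<lambda>\<sigma>. \<integral>\<omega>. sign_average n (\<lambda>k. Y k \<omega>) abs (x \<omega> + \<sigma> * Y n \<omega>) \<partial>M"
  have shifted: "integrable M (\<lambda>\<omega>. x \<omega> + \<sigma> * Y n \<omega>)" for \<sigma>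
    using Suc.prems Y by auto
  have mean: "(\<integral>\<omega>. sign_average (Suc n) (\<lambda>k. Y k \<omega>) abs (x \<omega>) \<partial>M) = (?I 1 + ?I (-1)) / 2"
    using integrable_sign_average[OF Y shifted[of 1], of n] integrable_sign_average[OF Y shifted[of "-1"], of n]
    by simp
  obtain \<sigma> where \<sigma>: "\<sigma> = 1 \<or> \<sigma> = -1" "(?I 1 + ?I (-1)) / 2 \<le> ?I \<sigma>"
  proof (cases "?I (-1) \<le> ?I 1")
    case True
    then show ?thesis by (intro that[of 1]) auto
  next
    case False
    then show ?thesis by (intro that[of "-1"]) auto
  qed
  obtain e where e: "\<forall>k. e k = 1 \<or> e k = -1"
    "?I \<sigma> \<le> (\<integral>\<omega>. \<bar>x \<omega> + \<sigma> * Y n \<omega> + (\<Sum>k<n. e k * Y k \<omega>)\<bar> \<partial>M)"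
    using Suc.IH[OF shifted] by blast
  define \<epsilon> where "\<epsilon> = e(n := \<sigma>)"
  have "(\<Sum>k<Suc n. \<epsilon> k * Y k \<omega>) = \<sigma> * Y n \<omega> + (\<Sum>k<n. e k * Y k \<omega>)" for \<omega>
    unfolding \<epsilon>_def by (simp add: add.commute)
  then have "?I \<sigma> \<le> (\<integral>\<omega>. \<bar>x \<omega> + (\<Sum>k<Suc n. \<epsilon> k * Y k \<omega>)\<bar> \<partial>M)"
    using e(2) by (simp add: add.assoc)
  moreover have "\<forall>k. \<epsilon> k = 1 \<or> \<epsilon> k = -1" using e(1) \<sigma>(1) by (simp add: \<epsilon>_def)
  ultimately show ?case using mean \<sigma>(2) by (intro exI[of _ \<epsilon>]) simp
qed

lemma integrable_sqrt_sum_squares: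
  fixes Y :: "nat \<Rightarrow> 'a \<Rightarrow> real"
  assumes Y: "\<And>k. integrable M (Y k)"
  shows "integrable M (\<lambda>\<omega>. sqrt (\<Sum>k<n. (Y k \<omega>)\<^sup>2))"
proof (rule Bochner_Integration.integrable_bound)
  show "integrable M (\<lambda>\<omega>. \<Sum>k<n. \<bar>Y k \<omega>\<bar>)" using Y by auto
  show "AE \<omega> in M. norm (sqrt (\<Sum>k<n. (Y k \<omega>)\<^sup>2)) \<le> norm (\<Sum>k<n. \<bar>Y k \<omega>\<bar>)"
    using L2_set_le_sum_abs[of "\<lambda>k. Y k _" "{..<n}"] by (simp add: L2_set_def sum_nonneg)
  have [measurable]: "Y k \<in> borel_measurable M" for k
    using Y by (rule borel_measurable_integrable)
  show "(\<lambda>\<omega>. sqrt (\<Sum>k<n. (Y k \<omega>)\<^sup>2)) \<in> borel_measurable M" by measurable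
qed

lemma integral_sqrt_sum_min_le:
  fixes Y :: "nat \<Rightarrow> 'a \<Rightarrow> real"
  assumes Y: "\<And>k. integrable M (Y k)" and "0 \<le> T"
  shows "(\<integral>\<omega>. sqrt (\<Sum>k<n. min ((Y k \<omega>)\<^sup>2) T) \<partial>M) \<le> (\<integral>\<omega>. sqrt (\<Sum>k<n. (Y k \<omega>)\<^sup>2) \<partial>M)"
proof (rule integral_mono[OF _ integrable_sqrt_sum_squares[where Y=Y, OF Y]])
  have [measurable]: "Y k \<in> borel_measurable M" for k
    using Y by (rule borel_measurable_integrable)
  show "integrable M (\<lambda>\<omega>. sqrt (\<Sum>k<n. min ((Y k \<omega>)\<^sup>2) T))"
  proof (rule Bochner_Integration.integrable_bound[OF integrable_sqrt_sum_squares[where Y=Y, OF Y]])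
    show "AE \<omega> in M. norm (sqrt (\<Sum>k<n. min ((Y k \<omega>)\<^sup>2) T)) \<le> norm (sqrt (\<Sum>k<n. (Y k \<omega>)\<^sup>2))"
      using \<open>0 \<le> T\<close> by (intro AE_I2) (simp add: sum_nonneg sum_mono)
  qed measurable
  show "sqrt (\<Sum>k<n. min ((Y k \<omega>)\<^sup>2) T) \<le> sqrt (\<Sum>k<n. (Y k \<omega>)\<^sup>2)" for \<omega>
    by (rule real_sqrt_le_mono, rule sum_mono, rule min.cobounded1)
qed

lemma exists_subset_integral_abs_sum_ge:
  fixes Y :: "nat \<Rightarrow> 'a \<Rightarrow> real"
  assumes Y: "\<And>k. integrable M (Y k)"
  shows "\<exists>I \<subseteq> {..<n}.
     (\<integral>\<omega>. sqrt (\<Sum>k<n. (Y k \<omega>)\<^sup>2) \<partial>M) / (2 * sqrt 3) \<le> (\<integral>\<omega>. \<bar>\<Sum>k\<in>I. Y k \<omega>\<bar> \<partial>M)"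
proof -
  obtain \<epsilon> where \<epsilon>: "\<forall>k. \<epsilon> k = 1 \<or> \<epsilon> k = -1"
    and sel: "(\<integral>\<omega>. sign_average n (\<lambda>k. Y k \<omega>) abs 0 \<partial>M) \<le> (\<integral>\<omega>. \<bar>\<Sum>k<n. \<epsilon> k * Y k \<omega>\<bar> \<partial>M)"
    using exists_signs_integral_sign_average_le[where Y=Y and n=n, OF Y integrable_zero] by auto
  have sqrt_int: "integrable M (\<lambda>\<omega>. sqrt (\<Sum>k<n. (Y k \<omega>)\<^sup>2))"
    by (rule integrable_sqrt_sum_squares[OF Y])
  define Ip Im where "Ip = {k \<in> {..<n}. \<epsilon> k = 1}" and "Im = {k \<in> {..<n}. \<epsilon> k = -1}"
  have "(\<Sum>k<n. \<epsilon> k * Y k \<omega>) = (\<Sum>k\<in>Ip. Y k \<omega>) - (\<Sum>k\<in>Im. Y k \<omega>)" for \<omega>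
  proof -
    have "(\<Sum>k<n. \<epsilon> k * Y k \<omega>)
        = (\<Sum>k<n. (if \<epsilon> k = 1 then Y k \<omega> else 0) - (if \<epsilon> k = -1 then Y k \<omega> else 0))"
      by (intro sum.cong refl) (use \<epsilon> in force)
    then show ?thesis
      unfolding sum_subtractf Ip_def Im_def by (simp only: sum.inter_filter[OF finite_lessThan])
  qed
  then have split: "\<bar>\<Sum>k<n. \<epsilon> k * Y k \<omega>\<bar> \<le> \<bar>\<Sum>k\<in>Ip. Y k \<omega>\<bar> + \<bar>\<Sum>k\<in>Im. Y k \<omega>\<bar>" for \<omega>
    by (metis abs_triangle_ineq4)
  have "(\<integral>\<omega>. sqrt (\<Sum>k<n. (Y k \<omega>)\<^sup>2) \<partial>M) / sqrt 3 = (\<integral>\<omega>. sqrt (\<Sum>k<n. (Y k \<omega>)\<^sup>2) / sqrt 3 \<partial>M)"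
    by simp
  also have "\<dots> \<le> (\<integral>\<omega>. sign_average n (\<lambda>k. Y k \<omega>) abs 0 \<partial>M)"
  proof (rule integral_mono)
    show "integrable M (\<lambda>\<omega>. sign_average n (\<lambda>k. Y k \<omega>) abs 0)"
      by (rule integrable_sign_average[where Y=Y and x="\<lambda>_. 0", OF Y integrable_zero])
  qed (use sqrt_int khintchine_lower_bound in auto)
  also have "\<dots> \<le> (\<integral>\<omega>. \<bar>\<Sum>k<n. \<epsilon> k * Y k \<omega>\<bar> \<partial>M)"
    by (rule sel)
  also have "\<dots> \<le> (\<integral>\<omega>. \<bar>\<Sum>k\<in>Ip. Y k \<omega>\<bar> + \<bar>\<Sum>k\<in>Im. Y k \<omega>\<bar> \<partial>M)"
    by (rule integral_mono) (use Y split in auto)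
  also have "\<dots> = (\<integral>\<omega>. \<bar>\<Sum>k\<in>Ip. Y k \<omega>\<bar> \<partial>M) + (\<integral>\<omega>. \<bar>\<Sum>k\<in>Im. Y k \<omega>\<bar> \<partial>M)"
    using Y by (intro Bochner_Integration.integral_add integrable_abs Bochner_Integration.integrable_sum)
  finally have "(\<integral>\<omega>. sqrt (\<Sum>k<n. (Y k \<omega>)\<^sup>2) \<partial>M) / (2 * sqrt 3)
      \<le> (\<integral>\<omega>. \<bar>\<Sum>k\<in>Ip. Y k \<omega>\<bar> \<partial>M) \<or> (\<integral>\<omega>. sqrt (\<Sum>k<n. (Y k \<omega>)\<^sup>2) \<partial>M) / (2 * sqrt 3)
      \<le> (\<integral>\<omega>. \<bar>\<Sum>k\<in>Im. Y k \<omega>\<bar> \<partial>M)"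
    by (simp only: mult.commute[of 2] divide_divide_eq_left[symmetric]) linarith
  moreover have "Ip \<subseteq> {..<n}" "Im \<subseteq> {..<n}" by (auto simp: Ip_def Im_def)
  ultimately show ?thesis by blast
qed

lemma exists_finite_subset_integral_abs_sum_ge:
  fixes X :: "nat \<Rightarrow> 'a \<Rightarrow> real" and s :: "nat \<Rightarrow> nat" and K :: real and N :: nat
  assumes int: "\<And>n. integrable M (X n)" and "strict_mono s" "0 < K" "1 \<le> N"
    and big: "2 * sqrt 3 * K * sqrt N \<le> (\<integral>\<omega>. sqrt (\<Sum>k<N. (X (s k) \<omega>)\<^sup>2) \<partial>M)"
  shows "\<exists>F \<subseteq> s ` {..<N}. F \<noteq> {} \<and> K * sqrt (card F) \<le> (\<integral>\<omega>. \<bar>\<Sum>n\<in>F. X n \<omega>\<bar> \<partial>M)"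
proof -
  define Y where "Y k = X (s k)" for k
  have Y: "integrable M (Y k)" for k by (simp add: Y_def int)
  obtain I where I: "I \<subseteq> {..<N}"
    and "(\<integral>\<omega>. sqrt (\<Sum>k<N. (Y k \<omega>)\<^sup>2) \<partial>M) / (2 * sqrt 3) \<le> (\<integral>\<omega>. \<bar>\<Sum>k\<in>I. Y k \<omega>\<bar> \<partial>M)"
    using exists_subset_integral_abs_sum_ge[where Y=Y, OF Y] by blast
  moreover have "K * sqrt N * (2 * sqrt 3) \<le> (\<integral>\<omega>. sqrt (\<Sum>k<N. (Y k \<omega>)\<^sup>2) \<partial>M)"
    using big by (simp only: Y_def mult.commute mult.left_commute)
  then have "K * sqrt N \<le> (\<integral>\<omega>. sqrt (\<Sum>k<N. (Y k \<omega>)\<^sup>2) \<partial>M) / (2 * sqrt 3)"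
    by (simp add: pos_le_divide_eq)
  ultimately have I_big: "K * sqrt N \<le> (\<integral>\<omega>. \<bar>\<Sum>k\<in>I. Y k \<omega>\<bar> \<partial>M)" by linarith
  have inj: "inj_on s I" using strict_mono_imp_inj_on[OF \<open>strict_mono s\<close>] by (auto intro: inj_on_subset)
  have sum: "(\<Sum>n\<in>s ` I. X n \<omega>) = (\<Sum>k\<in>I. Y k \<omega>)" for \<omega>
    by (simp add: sum.reindex[OF inj] Y_def)
  have "card (s ` I) \<le> N"
    using card_mono[OF _ I] by (simp add: card_image[OF inj])
  then have "K * sqrt (card (s ` I)) \<le> K * sqrt N"
    using \<open>0 < K\<close> by (intro mult_left_mono) auto
  then have "K * sqrt (card (s ` I)) \<le> (\<integral>\<omega>. \<bar>\<Sum>n\<in>s ` I. X n \<omega>\<bar> \<partial>M)"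
    using I_big by (simp add: sum)
  moreover have "0 < K * sqrt N" using \<open>0 < K\<close> \<open>1 \<le> N\<close> by simp
  then have "I \<noteq> {}" using I_big by auto
  ultimately show ?thesis using I by (intro exI[of _ "s ` I"]) auto
qed

section \<open>Choosing subsequences\<close>

lemma subseq_eventually_pairwise:
  fixes P :: "nat \<Rightarrow> bool" and Q :: "nat \<Rightarrow> nat \<Rightarrow> bool"
  assumes "eventually P sequentially" "\<And>i. eventually (Q i) sequentially"
  shows "\<exists>s :: nat \<Rightarrow> nat. strict_mono s \<and> (\<forall>k. P (s k)) \<and> (\<forall>i j. i < j \<longrightarrow> Q (s i) (s j))"
proof -
  obtain N0 where N0: "\<And>n. n \<ge> N0 \<Longrightarrow> P n" using assms(1) unfolding eventually_sequentially by auto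
  have "\<forall>i. \<exists>N. \<forall>n\<ge>N. Q i n" using assms(2) unfolding eventually_sequentially by auto
  then obtain Nq where Nq: "\<And>i n. n \<ge> Nq i \<Longrightarrow> Q i n" by metis
  define s where "s = rec_nat N0 (\<lambda>_ sk. max (Suc sk) (Max (Nq ` {..sk})))"
  have s0: "s 0 = N0" unfolding s_def by simp
  have sS: "s (Suc k) = max (Suc (s k)) (Max (Nq ` {..s k}))" for k unfolding s_def by simp
  have sm: "strict_mono s"
  proof (rule strict_monoI_Suc)
    fix n show "s n < s (Suc n)" unfolding sS by (rule less_le_trans[OF lessI max.cobounded1])
  qed
  have sN: "s k \<ge> N0" for k using strict_mono_leD[OF sm, of 0 k] by (simp add: s0)
  have sQ: "Q (s i) (s j)" if "i < j" for i j
  proof -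
    have "s j \<ge> s (Suc i)" using strict_mono_leD[OF sm] that by simp
    moreover have "Max (Nq ` {..s i}) \<ge> Nq (s i)" by (rule Max_ge) auto
    moreover have "s (Suc i) \<ge> Max (Nq ` {..s i})" by (simp only: sS)
    ultimately show ?thesis by (intro Nq) linarith
  qed
  show ?thesis
  proof (intro exI[where x=s] conjI allI impI)
    show "strict_mono s" by (rule sm)
    show "P (s k)" for k by (rule N0[OF sN])
    show "Q (s i) (s j)" if "i < j" for i j by (rule sQ[OF that])
  qed
qed

lemma enumerate_image_lessThan:
  fixes S :: "nat set"
  assumes S: "infinite S"
  shows "\<exists>c. enumerate S ` {..<c} = S \<inter> {..<b}"
proof -
  have "\<exists>n. b \<le> enumerate S n" using le_enumerate[OF S, of b] by blast
  define c where "c = (LEAST n. b \<le> enumerate S n)"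
  have below: "enumerate S k < b \<longleftrightarrow> k < c" for k
  proof
    assume "enumerate S k < b"
    then show "k < c"
      using LeastI_ex[OF \<open>\<exists>n. b \<le> enumerate S n\<close>] S
      by (metis c_def enumerate_mono_le_iff not_le order.trans)
  next
    assume "k < c"
    then show "enumerate S k < b" unfolding c_def by (metis not_less_Least not_le)
  qed
  have "enumerate S ` {..<c} = S \<inter> {..<b}"
  proof
    show "enumerate S ` {..<c} \<subseteq> S \<inter> {..<b}" using below enumerate_in_set[OF S] by auto
    show "S \<inter> {..<b} \<subseteq> enumerate S ` {..<c}"
      using below enumerate_Ex[OF S] by (auto simp: image_iff) (metis lessThan_iff)
  qed
  then show ?thesis ..
qed

lemma UN_blocks_eq_initial_segment:
  fixes F :: "nat \<Rightarrow> nat set"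
  assumes fin: "\<And>j. finite (F j)" and ne: "\<And>j. F j \<noteq> {}"
    and ordered: "\<And>i j x y. i < j \<Longrightarrow> x \<in> F i \<Longrightarrow> y \<in> F j \<Longrightarrow> x < y"
  shows "(\<Union>i<j. F i) = (\<Union>i. F i) \<inter> {..<Min (F j)}"
proof
  have Min: "Min (F j) \<in> F j" using fin ne by simp
  show "(\<Union>i<j. F i) \<subseteq> (\<Union>i. F i) \<inter> {..<Min (F j)}"
    using ordered[OF _ _ Min] by blast
  show "(\<Union>i. F i) \<inter> {..<Min (F j)} \<subseteq> (\<Union>i<j. F i)"
  proof
    fix x assume "x \<in> (\<Union>i. F i) \<inter> {..<Min (F j)}"
    then obtain i where x: "x \<in> F i" "x < Min (F j)" by blast
    moreover have "\<not> j < i" using ordered[OF _ Min x(1)] x(2) by auto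
    moreover have "i \<noteq> j" using Min_le[OF fin x(1)] x(2) by auto
    ultimately show "x \<in> (\<Union>i<j. F i)" by (auto simp: not_less_iff_gr_or_eq)
  qed
qed

lemma exists_strict_mono_block_prefixes:
  fixes Q :: "nat set \<Rightarrow> nat \<Rightarrow> nat set \<Rightarrow> bool"
  assumes next_block: "\<And>P j. finite P \<Longrightarrow> \<exists>F. finite F \<and> F \<noteq> {} \<and> (\<forall>x\<in>P. \<forall>y\<in>F. x < y) \<and> Q P j F"
  shows "\<exists>m :: nat \<Rightarrow> nat. strict_mono m \<and> (\<forall>j. \<exists>P F. finite P \<and> finite F \<and> F \<noteq> {} \<and>
     P \<inter> F = {} \<and> Q P j F \<and> m ` {..<card P + card F} = P \<union> F)"
proof -
  obtain blk where blk: "\<And>P j. finite P \<Longrightarrow> finite (blk P j) \<and> blk P j \<noteq> {} \<and>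
      (\<forall>x\<in>P. \<forall>y\<in>blk P j. x < y) \<and> Q P j (blk P j)"
    using next_block by metis
  define PP where "PP = rec_nat {} (\<lambda>j P. P \<union> blk P j)"
  have PP_0: "PP 0 = {}" and PP_Suc: "PP (Suc j) = PP j \<union> blk (PP j) j" for j
    by (simp_all add: PP_def)
  have fin: "finite (PP j)" for j
    by (induction j) (simp_all add: PP_0 PP_Suc blk)
  define F where "F j = blk (PP j) j" for j
  have F: "finite (F j)" "F j \<noteq> {}" "\<And>x y. x \<in> PP j \<Longrightarrow> y \<in> F j \<Longrightarrow> x < y" "Q (PP j) j (F j)"
    for j using blk[OF fin[of j], of j] by (auto simp: F_def)
  have PP_UN: "PP j = (\<Union>i<j. F i)" for j
  proof (induction j)
    case (Suc j)
    have "PP (Suc j) = PP j \<union> F j" by (simp add: PP_Suc F_def)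
    with Suc show ?case by (simp add: lessThan_Suc Un_commute)
  qed (simp add: PP_0)
  have ordered: "x < y" if "i < j" "x \<in> F i" "y \<in> F j" for i j x y
  proof -
    have "x \<in> PP j" using that(1,2) by (auto simp: PP_UN)
    then show ?thesis using F(3) that(3) by blast
  qed
  define S where "S = (\<Union>j. F j)"
  have PP_eq: "PP j = S \<inter> {..<Min (F j)}" for j
    unfolding PP_UN S_def by (rule UN_blocks_eq_initial_segment[OF F(1,2) ordered])
  have "Min (F i) < Min (F j)" if "i < j" for i j
    using ordered[OF that Min_in[OF F(1,2)] Min_in[OF F(1,2)]] .
  then have "strict_mono (\<lambda>j. Min (F j))" by (rule strict_monoI)
  moreover have "range (\<lambda>j. Min (F j)) \<subseteq> S"
    using F(1,2) by (auto simp: S_def)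
  ultimately have "infinite S"
    using infinite_super range_inj_infinite strict_mono_imp_inj_on by blast
  define m where "m = enumerate S"
  have m: "strict_mono m" unfolding m_def by (rule strict_monoI) (rule enumerate_mono[OF _ \<open>infinite S\<close>])
  have init: "m ` {..<card (PP j)} = PP j" for j
  proof -
    obtain c where "enumerate S ` {..<c} = S \<inter> {..<Min (F j)}"
      using enumerate_image_lessThan[OF \<open>infinite S\<close>] by blast
    then have c: "m ` {..<c} = PP j" by (simp only: m_def PP_eq[of j])
    moreover have "card (m ` {..<c}) = c"
      using strict_mono_imp_inj_on[OF m] by (simp add: card_image inj_on_subset)
    ultimately show ?thesis by simp
  qed
  have disj: "PP j \<inter> F j = {}" for j using F(3) by blast
  have "m ` {..<card (PP j) + card (F j)} = PP j \<union> F j" for j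
    using init[of "Suc j"] fin F(1) disj by (simp add: PP_Suc F_def[symmetric] card_Un_disjoint)
  then show ?thesis
    using fin F(1,2,4) disj by (intro exI[of _ m] conjI allI m exI[of _ "PP _"] exI[of _ "F _"]) simp
qed

lemma integral_abs_prefix_sum_ge:
  fixes X :: "nat \<Rightarrow> 'a \<Rightarrow> real" and m :: "nat \<Rightarrow> nat" and P F :: "nat set" and t :: real
  assumes int: "\<And>n. integrable M (X n)" and "strict_mono m"
    and fin: "finite P" "finite F" "F \<noteq> {}" "P \<inter> F = {}"
    and img: "m ` {..<card P + card F} = P \<union> F"
    and grow: "((\<integral>\<omega>. \<bar>\<Sum>n\<in>P. X n \<omega>\<bar> \<partial>M) + t * sqrt (card P + 1)) * sqrt (card F)
      \<le> (\<integral>\<omega>. \<bar>\<Sum>n\<in>F. X n \<omega>\<bar> \<partial>M)" and "0 \<le> t"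
  shows "t * sqrt (card P + card F) \<le> (\<integral>\<omega>. \<bar>\<Sum>k<card P + card F. X (m k) \<omega>\<bar> \<partial>M)"
proof -
  define N where "N = card P + card F"
  define cP cF where "cP = (\<integral>\<omega>. \<bar>\<Sum>n\<in>P. X n \<omega>\<bar> \<partial>M)" and "cF = (\<integral>\<omega>. \<bar>\<Sum>n\<in>F. X n \<omega>\<bar> \<partial>M)"
  have F1: "1 \<le> card F" using fin by (simp add: Suc_le_eq card_gt_0_iff)
  have sum: "(\<Sum>k<N. X (m k) \<omega>) = (\<Sum>n\<in>P. X n \<omega>) + (\<Sum>n\<in>F. X n \<omega>)" for \<omega>
  proof -
    have "inj_on m {..<N}" using strict_mono_imp_inj_on[OF \<open>strict_mono m\<close>] by (auto intro: inj_on_subset)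
    from sum.reindex[OF this, of "\<lambda>n. X n \<omega>"]
    have "(\<Sum>k<N. X (m k) \<omega>) = (\<Sum>n\<in>P \<union> F. X n \<omega>)"
      using img by (simp add: N_def)
    also have "\<dots> = (\<Sum>n\<in>P. X n \<omega>) + (\<Sum>n\<in>F. X n \<omega>)"
      using fin by (intro sum.union_disjoint) auto
    finally show ?thesis .
  qed
  have "cF \<le> (\<integral>\<omega>. \<bar>\<Sum>k<N. X (m k) \<omega>\<bar> + \<bar>\<Sum>n\<in>P. X n \<omega>\<bar> \<partial>M)"
    unfolding cF_def using int by (intro integral_mono) (auto simp: sum)
  also have "\<dots> = (\<integral>\<omega>. \<bar>\<Sum>k<N. X (m k) \<omega>\<bar> \<partial>M) + cP"
    unfolding cP_def using int by (intro Bochner_Integration.integral_add) auto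
  finally have triangle: "cF - cP \<le> (\<integral>\<omega>. \<bar>\<Sum>k<N. X (m k) \<omega>\<bar> \<partial>M)" by simp
  have "real (card P) * 1 \<le> real (card P) * real (card F)"
    using F1 by (intro mult_left_mono) auto
  then have "real N \<le> real (card P + 1) * real (card F)"
    by (simp add: N_def distrib_right)
  then have "t * sqrt N \<le> t * (sqrt (card P + 1) * sqrt (card F))"
    using \<open>0 \<le> t\<close> by (intro mult_left_mono) (auto simp: real_sqrt_mult[symmetric])
  also have "\<dots> \<le> (cP + t * sqrt (card P + 1)) * sqrt (card F) - cP"
    using mult_left_mono[of 1 "sqrt (card F)" cP] F1 by (simp add: cP_def algebra_simps)
  also have "\<dots> \<le> (\<integral>\<omega>. \<bar>\<Sum>k<N. X (m k) \<omega>\<bar> \<partial>M)"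
    using grow triangle unfolding cP_def cF_def by linarith
  finally show ?thesis by (simp add: N_def)
qed

lemma exists_subseq_integral_abs_sum_unbounded:
  fixes X :: "nat \<Rightarrow> 'a \<Rightarrow> real"
  assumes int: "\<And>n. integrable M (X n)"
    and blocks: "\<And>n0 K. \<exists>F. finite F \<and> F \<noteq> {} \<and> (\<forall>n\<in>F. n0 \<le> n) \<and>
      K * sqrt (card F) \<le> (\<integral>\<omega>. \<bar>\<Sum>n\<in>F. X n \<omega>\<bar> \<partial>M)"
  shows "\<exists>m :: nat \<Rightarrow> nat. strict_mono m \<and> (\<forall>C. \<exists>N\<ge>1. C * sqrt N < (\<integral>\<omega>. \<bar>\<Sum>k<N. X (m k) \<omega>\<bar> \<partial>M))"
proof -
  define c where "c P = (\<integral>\<omega>. \<bar>\<Sum>n\<in>P. X n \<omega>\<bar> \<partial>M)" for P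
  \<comment> \<open>The block after \<open>P\<close> must outweigh \<open>c P\<close> in the triangle inequality; elements of \<open>P\<close>
    are bounded by \<open>\<Sum>P\<close>.\<close>
  have "\<exists>m :: nat \<Rightarrow> nat. strict_mono m \<and> (\<forall>j::nat. \<exists>P F. finite P \<and> finite F \<and> F \<noteq> {} \<and> P \<inter> F = {} \<and>
      (c P + j * sqrt (card P + 1)) * sqrt (card F) \<le> c F \<and> m ` {..<card P + card F} = P \<union> F)"
  proof (rule exists_strict_mono_block_prefixes)
    fix P :: "nat set" and j :: nat assume "finite P"
    obtain F where F: "finite F" "F \<noteq> {}" "\<forall>n\<in>F. Suc (\<Sum>P) \<le> n"
      "(c P + j * sqrt (card P + 1)) * sqrt (card F) \<le> c F"
      using blocks[of "Suc (\<Sum>P)" "c P + j * sqrt (card P + 1)"] by (auto simp: c_def)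
    moreover have "x < y" if "x \<in> P" "y \<in> F" for x y
      using member_le_sum[OF that(1) _ \<open>finite P\<close>, of id] F(3) that(2) by force
    ultimately show "\<exists>F. finite F \<and> F \<noteq> {} \<and> (\<forall>x\<in>P. \<forall>y\<in>F. x < y) \<and>
        (c P + j * sqrt (card P + 1)) * sqrt (card F) \<le> c F"
      by blast
  qed
  then obtain m :: "nat \<Rightarrow> nat" where m: "strict_mono m" and blk: "\<And>j::nat. \<exists>P F. finite P \<and> finite F \<and>
      F \<noteq> {} \<and> P \<inter> F = {} \<and> (c P + j * sqrt (card P + 1)) * sqrt (card F) \<le> c F \<and>
      m ` {..<card P + card F} = P \<union> F"
    by blast
  have "\<exists>N\<ge>1. C * sqrt N < (\<integral>\<omega>. \<bar>\<Sum>k<N. X (m k) \<omega>\<bar> \<partial>M)" for C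
  proof -
    obtain j :: nat where "C < j" using reals_Archimedean2 by blast
    obtain P F where PF: "finite P" "finite F" "F \<noteq> {}" "P \<inter> F = {}"
      and grow: "(c P + j * sqrt (card P + 1)) * sqrt (card F) \<le> c F"
      and img: "m ` {..<card P + card F} = P \<union> F"
      using blk[of j] by blast
    have "1 \<le> card P + card F" using PF by (simp add: Suc_le_eq card_gt_0_iff)
    moreover have "j * sqrt (card P + card F) \<le> (\<integral>\<omega>. \<bar>\<Sum>k<card P + card F. X (m k) \<omega>\<bar> \<partial>M)"
      using grow unfolding c_def by (intro integral_abs_prefix_sum_ge[OF int m PF img]) auto
    moreover have "C * sqrt (card P + card F) < j * sqrt (card P + card F)"
      using \<open>C < j\<close> \<open>1 \<le> card P + card F\<close> by (intro mult_strict_right_mono) auto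
    ultimately show ?thesis by (intro exI[of _ "card P + card F"] conjI) linarith+
  qed
  then show ?thesis using m by blast
qed

section \<open>Integrals on a probability space\<close>

lemma exists_step_function_approx:
  fixes \<psi> :: "'a \<Rightarrow> real"
  assumes [measurable]: "\<psi> \<in> borel_measurable M" and \<psi>: "\<And>\<omega>. \<omega> \<in> space M \<Longrightarrow> 0 \<le> \<psi> \<omega> \<and> \<psi> \<omega> \<le> C"
    and "0 < e"
  shows "\<exists>(J :: nat) c A. (\<forall>j. A j \<in> sets M) \<and>
    (\<forall>\<omega>\<in>space M. \<bar>\<psi> \<omega> - (\<Sum>j\<le>J. c j * indicator (A j) \<omega>)\<bar> \<le> e)"
proof -
  define lvl where "lvl \<omega> = nat \<lfloor>\<psi> \<omega> / e\<rfloor>" for \<omega>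
  define A where "A j = {\<omega> \<in> space M. lvl \<omega> = j}" for j
  have "\<bar>\<psi> \<omega> - (\<Sum>j\<le>nat \<lceil>C / e\<rceil>. (real j * e) * indicator (A j) \<omega>)\<bar> \<le> e" if "\<omega> \<in> space M" for \<omega>
  proof -
    have "lvl \<omega> \<le> nat \<lceil>C / e\<rceil>"
      unfolding lvl_def using \<psi>[OF that] \<open>0 < e\<close>
      by (intro nat_mono order_trans[OF floor_le_ceiling ceiling_mono] divide_right_mono) auto
    moreover have "(\<Sum>j\<le>nat \<lceil>C / e\<rceil>. (real j * e) * indicator (A j) \<omega>)
        = (\<Sum>j\<le>nat \<lceil>C / e\<rceil>. if j = lvl \<omega> then real (lvl \<omega>) * e else 0)"
      by (intro sum.cong refl) (auto simp: A_def indicator_def that)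
    ultimately have step: "(\<Sum>j\<le>nat \<lceil>C / e\<rceil>. (real j * e) * indicator (A j) \<omega>) = real (lvl \<omega>) * e"
      by simp
    have "real (lvl \<omega>) \<le> \<psi> \<omega> / e" "\<psi> \<omega> / e < real (lvl \<omega>) + 1"
      using \<psi>[OF that] \<open>0 < e\<close> by (simp_all add: lvl_def)
    then have "real (lvl \<omega>) * e \<le> \<psi> \<omega>" "\<psi> \<omega> \<le> real (lvl \<omega>) * e + e"
      using \<open>0 < e\<close> by (simp_all add: field_simps)
    then show ?thesis unfolding step by simp
  qed
  moreover have "A j \<in> sets M" for j unfolding A_def lvl_def by measurable
  ultimately show ?thesis
    by (intro exI[of _ "nat \<lceil>C / e\<rceil>"] exI[of _ "\<lambda>j. real j * e"] exI[of _ A]) simp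
qed

context prob_space
begin

lemma integral_uniform_measure:
  fixes g :: "'a \<Rightarrow> real"
  assumes A: "A \<in> sets M" "measure M A > 0" and [measurable]: "g \<in> borel_measurable M"
  shows "(\<integral>\<omega>. g \<omega> \<partial>uniform_measure M A) = (\<integral>\<omega>. g \<omega> * indicator A \<omega> \<partial>M) / measure M A"
proof -
  have "(\<lambda>x. indicator A x / emeasure M A) = (\<lambda>x. ennreal (indicator A x / measure M A))"
    using A divide_ennreal[of 1 "measure M A"] by (auto simp: emeasure_eq_measure split: split_indicator)
  then have "uniform_measure M A = density M (\<lambda>x. ennreal (indicator A x / measure M A))"
    unfolding uniform_measure_def by simp
  then have "(\<integral>\<omega>. g \<omega> \<partial>uniform_measure M A) = (\<integral>x. (indicator A x / measure M A) *\<^sub>R g x \<partial>M)"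
    using A by (simp add: integral_density)
  also have "\<dots> = (\<integral>\<omega>. g \<omega> * indicator A \<omega> \<partial>M) / measure M A"
    by (simp add: mult.commute)
  finally show ?thesis .
qed

lemma integrable_bounded:
  fixes h :: "'a \<Rightarrow> real"
  shows "h \<in> borel_measurable M \<Longrightarrow> (\<And>\<omega>. \<omega> \<in> space M \<Longrightarrow> \<bar>h \<omega>\<bar> \<le> D) \<Longrightarrow> integrable M h"
  by (rule integrable_const_bound[where B=D]) auto

lemma abs_integral_mult_diff_le:
  fixes f \<psi> \<phi> :: "'a \<Rightarrow> real"
  assumes [measurable]: "f \<in> borel_measurable M" "\<psi> \<in> borel_measurable M" "\<phi> \<in> borel_measurable M"
    and f: "\<And>\<omega>. \<omega> \<in> space M \<Longrightarrow> \<bar>f \<omega>\<bar> \<le> B"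
    and \<psi>: "\<And>\<omega>. \<omega> \<in> space M \<Longrightarrow> \<bar>\<psi> \<omega>\<bar> \<le> C" and \<phi>: "\<And>\<omega>. \<omega> \<in> space M \<Longrightarrow> \<bar>\<phi> \<omega>\<bar> \<le> C"
    and close: "\<And>\<omega>. \<omega> \<in> space M \<Longrightarrow> \<bar>\<psi> \<omega> - \<phi> \<omega>\<bar> \<le> e"
  shows "\<bar>(\<integral>\<omega>. f \<omega> * \<psi> \<omega> \<partial>M) - (\<integral>\<omega>. f \<omega> * \<phi> \<omega> \<partial>M)\<bar> \<le> B * e"
proof -
  have bound: "\<bar>f \<omega> * h \<omega>\<bar> \<le> B * D" if "\<omega> \<in> space M" "\<bar>h \<omega>\<bar> \<le> D" for h :: "'a \<Rightarrow> real" and \<omega> D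
    using f[OF that(1)] that(2) by (auto simp: abs_mult intro!: mult_mono order_trans[OF abs_ge_zero])
  have int: "integrable M (\<lambda>\<omega>. f \<omega> * h \<omega>)"
    if "h \<in> borel_measurable M" "\<And>\<omega>. \<omega> \<in> space M \<Longrightarrow> \<bar>h \<omega>\<bar> \<le> C" for h
    using that bound by (intro integrable_bounded[of _ "B * C"]) auto
  have "(\<integral>\<omega>. f \<omega> * \<psi> \<omega> \<partial>M) - (\<integral>\<omega>. f \<omega> * \<phi> \<omega> \<partial>M) = (\<integral>\<omega>. f \<omega> * (\<psi> \<omega> - \<phi> \<omega>) \<partial>M)"
    using int[of \<psi>] int[of \<phi>] \<psi> \<phi> by (simp add: right_diff_distrib)
  also have "\<bar>\<dots>\<bar> \<le> (\<integral>\<omega>. \<bar>f \<omega> * (\<psi> \<omega> - \<phi> \<omega>)\<bar> \<partial>M)"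
    by (rule integral_abs_bound)
  also have "\<dots> \<le> (\<integral>\<omega>. B * e \<partial>M)"
    using bound[of _ "\<lambda>\<omega>. \<psi> \<omega> - \<phi> \<omega>", OF _ close] int[of \<psi>] int[of \<phi>] \<psi> \<phi>
    by (intro integral_mono) (auto simp: right_diff_distrib)
  finally show ?thesis by (simp add: prob_space)
qed

lemma tendsto_integral_mult_of_indicator:
  fixes f :: "nat \<Rightarrow> 'a \<Rightarrow> real" and G \<psi> :: "'a \<Rightarrow> real"
  assumes [measurable]: "\<And>n. f n \<in> borel_measurable M" "G \<in> borel_measurable M" "\<psi> \<in> borel_measurable M"
    and f: "\<And>n \<omega>. \<omega> \<in> space M \<Longrightarrow> \<bar>f n \<omega>\<bar> \<le> B" and G: "\<And>\<omega>. \<omega> \<in> space M \<Longrightarrow> \<bar>G \<omega>\<bar> \<le> B"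
    and \<psi>: "\<And>\<omega>. \<omega> \<in> space M \<Longrightarrow> 0 \<le> \<psi> \<omega> \<and> \<psi> \<omega> \<le> C"
    and ind: "\<And>A. A \<in> sets M \<Longrightarrow> (\<lambda>n. \<integral>\<omega>. f n \<omega> * indicator A \<omega> \<partial>M) \<longlonglongrightarrow> (\<integral>\<omega>. G \<omega> * indicator A \<omega> \<partial>M)"
  shows "(\<lambda>n. \<integral>\<omega>. f n \<omega> * \<psi> \<omega> \<partial>M) \<longlonglongrightarrow> (\<integral>\<omega>. G \<omega> * \<psi> \<omega> \<partial>M)"
proof -
  have "\<exists>(J :: nat) c A. (\<forall>j. A j \<in> sets M) \<and>
      (\<forall>\<omega>\<in>space M. \<bar>\<psi> \<omega> - (\<Sum>j\<le>J. c j * indicator (A j) \<omega>)\<bar> \<le> 1 / real (Suc k))" for k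
    by (rule exists_step_function_approx[OF _ \<psi>]) simp_all
  then obtain J :: "nat \<Rightarrow> nat" and c :: "nat \<Rightarrow> nat \<Rightarrow> real" and A :: "nat \<Rightarrow> nat \<Rightarrow> 'a set"
    where A [measurable]: "\<And>k j. A k j \<in> sets M"
    and close: "\<And>k \<omega>. \<omega> \<in> space M \<Longrightarrow> \<bar>\<psi> \<omega> - (\<Sum>j\<le>J k. c k j * indicator (A k j) \<omega>)\<bar> \<le> 1 / real (Suc k)"
    by metis
  define step where "step k \<omega> = (\<Sum>j\<le>J k. c k j * indicator (A k j) \<omega>)" for k \<omega>
  have [measurable]: "step k \<in> borel_measurable M" for k unfolding step_def by measurable
  have \<psi>_bound: "\<bar>\<psi> \<omega>\<bar> \<le> C + 1" if "\<omega> \<in> space M" for \<omega>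
    using \<psi>[OF that] by simp
  have step_bound: "\<bar>step k \<omega>\<bar> \<le> C + 1" if "\<omega> \<in> space M" for k \<omega>
  proof -
    have "1 / real (Suc k) \<le> (1 :: real)" by simp
    then show ?thesis using close[OF that, of k] \<psi>[OF that] unfolding step_def abs_le_iff by linarith
  qed
  have split: "(\<integral>\<omega>. h \<omega> * step k \<omega> \<partial>M) = (\<Sum>j\<le>J k. c k j * (\<integral>\<omega>. h \<omega> * indicator (A k j) \<omega> \<partial>M))"
    if [measurable]: "h \<in> borel_measurable M" and h: "\<And>\<omega>. \<omega> \<in> space M \<Longrightarrow> \<bar>h \<omega>\<bar> \<le> B" for h k
  proof -
    have "integrable M (\<lambda>\<omega>. h \<omega> * indicator (A k j) \<omega>)" for j
    proof (rule integrable_bounded)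
      show "\<bar>h \<omega> * indicator (A k j) \<omega>\<bar> \<le> B" if "\<omega> \<in> space M" for \<omega>
        using h[OF that] by (auto simp: indicator_def)
    qed measurable
    then have "(\<integral>\<omega>. (\<Sum>j\<le>J k. c k j * (h \<omega> * indicator (A k j) \<omega>)) \<partial>M)
        = (\<Sum>j\<le>J k. c k j * (\<integral>\<omega>. h \<omega> * indicator (A k j) \<omega> \<partial>M))"
      by simp
    moreover have "h \<omega> * step k \<omega> = (\<Sum>j\<le>J k. c k j * (h \<omega> * indicator (A k j) \<omega>))" for \<omega>
      unfolding step_def by (simp only: sum_distrib_left mult.left_commute)
    ultimately show ?thesis by simp
  qed
  show ?thesis
  proof (rule tendsto_uniform_approx)
    show "(\<lambda>n. \<integral>\<omega>. f n \<omega> * step k \<omega> \<partial>M) \<longlonglongrightarrow> (\<integral>\<omega>. G \<omega> * step k \<omega> \<partial>M)" for k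
    proof -
      have "(\<lambda>n. \<Sum>j\<le>J k. c k j * (\<integral>\<omega>. f n \<omega> * indicator (A k j) \<omega> \<partial>M))
          \<longlonglongrightarrow> (\<Sum>j\<le>J k. c k j * (\<integral>\<omega>. G \<omega> * indicator (A k j) \<omega> \<partial>M))"
        by (intro tendsto_sum tendsto_mult_left ind A)
      then show ?thesis using split[of "f _", OF _ f] split[OF _ G] by simp
    qed
    show "(\<lambda>k. B * (1 / real (Suc k))) \<longlonglongrightarrow> 0"
      by (intro tendsto_mult_right_zero tendsto_divide_0[OF tendsto_const]
          filterlim_at_top_imp_at_infinity[OF filterlim_compose[OF filterlim_real_sequentially filterlim_Suc]])
    show "\<bar>(\<integral>\<omega>. f n \<omega> * \<psi> \<omega> \<partial>M) - (\<integral>\<omega>. f n \<omega> * step k \<omega> \<partial>M)\<bar> \<le> B * (1 / real (Suc k))" for k n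
      using abs_integral_mult_diff_le[OF _ _ _ f \<psi>_bound step_bound close[unfolded step_def[symmetric]]] by simp
    show "\<bar>(\<integral>\<omega>. G \<omega> * step k \<omega> \<partial>M) - (\<integral>\<omega>. G \<omega> * \<psi> \<omega> \<partial>M)\<bar> \<le> B * (1 / real (Suc k))" for k
      using abs_integral_mult_diff_le[OF _ _ _ G \<psi>_bound step_bound close[unfolded step_def[symmetric]]]
      by (simp add: abs_minus_commute)
  qed
qed

lemma integrable_divide_sqrt_succ:
  fixes h g :: "'a \<Rightarrow> real"
  assumes [measurable]: "h \<in> borel_measurable M" "g \<in> borel_measurable M"
    and "\<And>\<omega>. \<omega> \<in> space M \<Longrightarrow> 0 \<le> h \<omega> \<and> h \<omega> \<le> D" "\<And>\<omega>. \<omega> \<in> space M \<Longrightarrow> 0 \<le> g \<omega>"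
  shows "integrable M (\<lambda>\<omega>. h \<omega> / sqrt (g \<omega> + 1))"
proof (rule integrable_bounded[where D=D])
  fix \<omega> assume \<omega>: "\<omega> \<in> space M"
  have "h \<omega> / sqrt (g \<omega> + 1) \<le> h \<omega>" using assms(3,4)[OF \<omega>] by (intro divide_sqrt_succ_le) auto
  then show "\<bar>h \<omega> / sqrt (g \<omega> + 1)\<bar> \<le> D" using assms(3,4)[OF \<omega>] by simp
qed measurable

lemma integral_weighted_square_le:
  fixes g :: "'a \<Rightarrow> real"
  assumes [measurable]: "g \<in> borel_measurable M" and g: "\<And>\<omega>. \<omega> \<in> space M \<Longrightarrow> 0 \<le> g \<omega> \<and> g \<omega> \<le> T"
  shows "(\<integral>\<omega>. (g \<omega>)\<^sup>2 * (1 / ((g \<omega> + 1) * sqrt (g \<omega> + 1))) \<partial>M) \<le> (\<integral>\<omega>. g \<omega> / sqrt (g \<omega> + 1) \<partial>M)"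
proof (rule integral_mono)
  have pointwise: "(g \<omega>)\<^sup>2 * (1 / ((g \<omega> + 1) * sqrt (g \<omega> + 1))) \<le> g \<omega> / sqrt (g \<omega> + 1)"
    if "\<omega> \<in> space M" for \<omega>
  proof -
    have "(g \<omega>)\<^sup>2 * (1 / ((g \<omega> + 1) * sqrt (g \<omega> + 1))) = g \<omega> / sqrt (g \<omega> + 1) * (g \<omega> / (g \<omega> + 1))"
      using g[OF that] by (simp add: power2_eq_square)
    also have "\<dots> \<le> g \<omega> / sqrt (g \<omega> + 1)"
      using g[OF that] by (intro mult_right_le_one_le) auto
    finally show ?thesis .
  qed
  show int: "integrable M (\<lambda>\<omega>. g \<omega> / sqrt (g \<omega> + 1))"
    using g by (intro integrable_divide_sqrt_succ) auto
  show "integrable M (\<lambda>\<omega>. (g \<omega>)\<^sup>2 * (1 / ((g \<omega> + 1) * sqrt (g \<omega> + 1))))"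
  proof (rule integrable_bounded)
    fix \<omega> assume \<omega>: "\<omega> \<in> space M"
    have "0 \<le> (g \<omega>)\<^sup>2 * (1 / ((g \<omega> + 1) * sqrt (g \<omega> + 1)))" using g[OF \<omega>] by simp
    moreover have "g \<omega> / sqrt (g \<omega> + 1) \<le> g \<omega>" using g[OF \<omega>] by (intro divide_sqrt_succ_le) auto
    ultimately show "\<bar>(g \<omega>)\<^sup>2 * (1 / ((g \<omega> + 1) * sqrt (g \<omega> + 1)))\<bar> \<le> T"
      using pointwise[OF \<omega>] g[OF \<omega>] by linarith
  qed measurable
  show "(g \<omega>)\<^sup>2 * (1 / ((g \<omega> + 1) * sqrt (g \<omega> + 1))) \<le> g \<omega> / sqrt (g \<omega> + 1)"
    if "\<omega> \<in> space M" for \<omega>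
    by (rule pointwise[OF that])
qed

lemma integral_sum_square_le:
  fixes u :: "nat \<Rightarrow> 'a \<Rightarrow> real" and q :: "'a \<Rightarrow> real"
  assumes [measurable]: "\<And>k. u k \<in> borel_measurable M" "q \<in> borel_measurable M"
    and u: "\<And>k \<omega>. \<omega> \<in> space M \<Longrightarrow> 0 \<le> u k \<omega> \<and> u k \<omega> \<le> T"
    and q: "\<And>\<omega>. \<omega> \<in> space M \<Longrightarrow> 0 \<le> q \<omega> \<and> q \<omega> \<le> 1"
    and "0 \<le> c" and off_diagonal: "\<And>i j. i < N \<Longrightarrow> j < N \<Longrightarrow> i \<noteq> j \<Longrightarrow> (\<integral>\<omega>. u i \<omega> * u j \<omega> * q \<omega> \<partial>M) \<le> c"
  shows "(\<integral>\<omega>. (\<Sum>k<N. u k \<omega>)\<^sup>2 * q \<omega> \<partial>M) \<le> real N * T\<^sup>2 + real N * real N * c"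
proof -
  have bound: "\<bar>u i \<omega> * u j \<omega> * q \<omega>\<bar> \<le> T\<^sup>2" if "\<omega> \<in> space M" for i j \<omega>
  proof -
    have "0 \<le> u i \<omega> * u j \<omega>" "u i \<omega> * u j \<omega> \<le> T * T"
      using u[OF that, of i] u[OF that, of j] by (auto intro: mult_mono)
    moreover have "u i \<omega> * u j \<omega> * q \<omega> \<le> u i \<omega> * u j \<omega>"
      using q[OF that] \<open>0 \<le> u i \<omega> * u j \<omega>\<close> by (intro mult_right_le_one_le) auto
    ultimately show ?thesis using q[OF that] by (simp add: power2_eq_square)
  qed
  have int: "integrable M (\<lambda>\<omega>. u i \<omega> * u j \<omega> * q \<omega>)" for i j
    using bound by (intro integrable_bounded) auto
  have entry: "(\<integral>\<omega>. u i \<omega> * u j \<omega> * q \<omega> \<partial>M) \<le> (if i = j then T\<^sup>2 else 0) + c"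
    if "i < N" "j < N" for i j
  proof (cases "i = j")
    case True
    have "(\<integral>\<omega>. u i \<omega> * u j \<omega> * q \<omega> \<partial>M) \<le> (\<integral>\<omega>. T\<^sup>2 \<partial>M)"
      using int by (intro integral_mono) (auto intro: abs_le_D1[OF bound])
    then show ?thesis using True \<open>0 \<le> c\<close> by (simp add: prob_space)
  qed (use off_diagonal that in simp)
  have "(\<integral>\<omega>. (\<Sum>k<N. u k \<omega>)\<^sup>2 * q \<omega> \<partial>M) = (\<integral>\<omega>. (\<Sum>i<N. \<Sum>j<N. u i \<omega> * u j \<omega> * q \<omega>) \<partial>M)"
    unfolding power2_eq_square sum_product by (simp add: sum_distrib_right)
  also have "\<dots> = (\<Sum>i<N. \<Sum>j<N. \<integral>\<omega>. u i \<omega> * u j \<omega> * q \<omega> \<partial>M)"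
    using int by simp
  also have "\<dots> \<le> (\<Sum>i<N. \<Sum>j<N. (if i = j then T\<^sup>2 else 0) + c)"
    by (intro sum_mono entry) auto
  also have "\<dots> = real N * T\<^sup>2 + real N * real N * c"
    by (simp add: sum.distrib algebra_simps)
  finally show ?thesis .
qed

lemma integral_sqrt_ge_moments:
  fixes g Z :: "'a \<Rightarrow> real" and N :: nat
  assumes [measurable]: "g \<in> borel_measurable M" "Z \<in> borel_measurable M"
    and g: "\<And>\<omega>. \<omega> \<in> space M \<Longrightarrow> 0 \<le> g \<omega>" and Z: "\<And>\<omega>. \<omega> \<in> space M \<Longrightarrow> 0 \<le> Z \<omega> \<and> Z \<omega> \<le> D"
    and "N \<ge> 1"
  defines "q \<equiv> \<lambda>\<omega>. 1 / ((g \<omega> + 1) * sqrt (g \<omega> + 1))"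
  shows "3 / (2 * sqrt N) * (\<integral>\<omega>. Z \<omega> / sqrt (g \<omega> + 1) \<partial>M)
      - 1 / (2 * N * sqrt N) * (\<integral>\<omega>. (Z \<omega>)\<^sup>2 * q \<omega> \<partial>M) \<le> (\<integral>\<omega>. sqrt (Z \<omega>) \<partial>M)"
proof -
  have q: "0 \<le> q \<omega> \<and> q \<omega> \<le> 1" if "\<omega> \<in> space M" for \<omega>
  proof -
    have "1 * 1 \<le> (g \<omega> + 1) * sqrt (g \<omega> + 1)" using g[OF that] by (intro mult_mono) auto
    then show ?thesis using g[OF that] by (simp add: q_def)
  qed
  have int1: "integrable M (\<lambda>\<omega>. Z \<omega> / sqrt (g \<omega> + 1))"
    using Z g by (intro integrable_divide_sqrt_succ) auto
  have int2: "integrable M (\<lambda>\<omega>. (Z \<omega>)\<^sup>2 * q \<omega>)"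
  proof (rule integrable_bounded[where D="D\<^sup>2"])
    fix \<omega> assume \<omega>: "\<omega> \<in> space M"
    have "(Z \<omega>)\<^sup>2 * q \<omega> \<le> (Z \<omega>)\<^sup>2" using q[OF \<omega>] by (intro mult_right_le_one_le) auto
    also have "\<dots> \<le> D\<^sup>2" using Z[OF \<omega>] by (intro power_mono) auto
    finally show "\<bar>(Z \<omega>)\<^sup>2 * q \<omega>\<bar> \<le> D\<^sup>2" using q[OF \<omega>] by simp
  qed (simp add: q_def)
  have int3: "integrable M (\<lambda>\<omega>. sqrt (Z \<omega>))"
    using Z by (intro integrable_bounded[where D="sqrt D"]) auto
  have pointwise: "3 / (2 * sqrt N) * (Z \<omega> / sqrt (g \<omega> + 1)) - 1 / (2 * N * sqrt N) * ((Z \<omega>)\<^sup>2 * q \<omega>)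
      \<le> sqrt (Z \<omega>)" if "\<omega> \<in> space M" for \<omega>
  proof -
    define S where "S = N * (g \<omega> + 1)"
    have "0 < S" using \<open>N \<ge> 1\<close> g[OF that] by (simp add: S_def)
    have sqrt_S: "sqrt S = sqrt N * sqrt (g \<omega> + 1)" by (simp add: S_def real_sqrt_mult)
    have "3 * Z \<omega> / (2 * sqrt S) = 3 / (2 * sqrt N) * (Z \<omega> / sqrt (g \<omega> + 1))"
      by (simp add: sqrt_S)
    moreover have "(Z \<omega>)\<^sup>2 / (2 * S * sqrt S) = 1 / (2 * N * sqrt N) * ((Z \<omega>)\<^sup>2 * q \<omega>)"
      unfolding sqrt_S by (simp add: S_def q_def ac_simps)
    ultimately show ?thesis
      using sqrt_ge_quadratic_minorant[OF _ \<open>0 < S\<close>, of "Z \<omega>"] Z[OF that] by linarith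
  qed
  have "3 / (2 * sqrt N) * (\<integral>\<omega>. Z \<omega> / sqrt (g \<omega> + 1) \<partial>M) - 1 / (2 * N * sqrt N) * (\<integral>\<omega>. (Z \<omega>)\<^sup>2 * q \<omega> \<partial>M)
      = (\<integral>\<omega>. 3 / (2 * sqrt N) * (Z \<omega> / sqrt (g \<omega> + 1)) - 1 / (2 * N * sqrt N) * ((Z \<omega>)\<^sup>2 * q \<omega>) \<partial>M)"
    by (simp only: integral_mult_right_zero Bochner_Integration.integral_diff[OF
          integrable_mult_right[OF int1] integrable_mult_right[OF int2]])
  also have "\<dots> \<le> (\<integral>\<omega>. sqrt (Z \<omega>) \<partial>M)"
    by (rule integral_mono[OF Bochner_Integration.integrable_diff[OF integrable_mult_right[OF int1]
          integrable_mult_right[OF int2]] int3 pointwise])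
  finally show ?thesis .
qed

lemma integral_sqrt_sum_ge:
  fixes g :: "'a \<Rightarrow> real" and w :: "nat \<Rightarrow> 'a \<Rightarrow> real"
  assumes [measurable]: "g \<in> borel_measurable M" "\<And>k. w k \<in> borel_measurable M"
    and g: "\<And>\<omega>. \<omega> \<in> space M \<Longrightarrow> 0 \<le> g \<omega> \<and> g \<omega> \<le> T"
    and w: "\<And>k \<omega>. \<omega> \<in> space M \<Longrightarrow> 0 \<le> w k \<omega> \<and> w k \<omega> \<le> T"
    and N: "N \<ge> 1" and "0 \<le> \<epsilon>"
    and first: "\<And>k. k < N \<Longrightarrow>
      (\<integral>\<omega>. g \<omega> / sqrt (g \<omega> + 1) \<partial>M) - \<epsilon> \<le> (\<integral>\<omega>. w k \<omega> / sqrt (g \<omega> + 1) \<partial>M)"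
    and second: "\<And>i j. i < N \<Longrightarrow> j < N \<Longrightarrow> i \<noteq> j \<Longrightarrow>
      (\<integral>\<omega>. w i \<omega> * w j \<omega> * (1 / ((g \<omega> + 1) * sqrt (g \<omega> + 1))) \<partial>M)
        \<le> (\<integral>\<omega>. (g \<omega>)\<^sup>2 * (1 / ((g \<omega> + 1) * sqrt (g \<omega> + 1))) \<partial>M) + 2 * \<epsilon>"
  shows "sqrt N * ((\<integral>\<omega>. g \<omega> / sqrt (g \<omega> + 1) \<partial>M) - 5 / 2 * \<epsilon> - T\<^sup>2 / (2 * real N))
    \<le> (\<integral>\<omega>. sqrt (\<Sum>k<N. w k \<omega>) \<partial>M)"
proof -
  define q where "q \<omega> = 1 / ((g \<omega> + 1) * sqrt (g \<omega> + 1))" for \<omega>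
  define a where "a = (\<integral>\<omega>. g \<omega> / sqrt (g \<omega> + 1) \<partial>M)"
  define b where "b = (\<integral>\<omega>. (g \<omega>)\<^sup>2 * q \<omega> \<partial>M)"
  define Z where "Z \<omega> = (\<Sum>k<N. w k \<omega>)" for \<omega>
  define r where "r = sqrt N"
  have r: "r > 0" "r * r = N" using N by (auto simp: r_def)
  have [measurable]: "q \<in> borel_measurable M" "Z \<in> borel_measurable M"
    unfolding q_def Z_def by measurable
  have q: "0 \<le> q \<omega> \<and> q \<omega> \<le> 1" if "\<omega> \<in> space M" for \<omega>
  proof -
    have "1 * 1 \<le> (g \<omega> + 1) * sqrt (g \<omega> + 1)" using g[OF that] by (intro mult_mono) auto
    then show ?thesis using g[OF that] by (simp add: q_def)
  qed
  have Z: "0 \<le> Z \<omega> \<and> Z \<omega> \<le> N * T" if "\<omega> \<in> space M" for \<omega>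
    using sum_mono[of "{..<N}" "\<lambda>k. w k \<omega>" "\<lambda>_. T"] w[OF that] by (auto simp: Z_def intro: sum_nonneg)
  have "(\<integral>\<omega>. Z \<omega> / sqrt (g \<omega> + 1) \<partial>M) = (\<Sum>k<N. \<integral>\<omega>. w k \<omega> / sqrt (g \<omega> + 1) \<partial>M)"
  proof -
    have "integrable M (\<lambda>\<omega>. w k \<omega> / sqrt (g \<omega> + 1))" for k
      using w g by (intro integrable_divide_sqrt_succ) auto
    then show ?thesis by (simp add: Z_def sum_divide_distrib)
  qed
  also have "\<dots> \<ge> (\<Sum>k<N. a - \<epsilon>)"
    using first by (intro sum_mono) (simp add: a_def)
  finally have first_moment: "N * (a - \<epsilon>) \<le> (\<integral>\<omega>. Z \<omega> / sqrt (g \<omega> + 1) \<partial>M)" by simp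
  have "0 \<le> b"
    unfolding b_def using q by (intro integral_nonneg_AE AE_I2) simp
  then have second_moment: "(\<integral>\<omega>. (Z \<omega>)\<^sup>2 * q \<omega> \<partial>M) \<le> N * T\<^sup>2 + real N * real N * (b + 2 * \<epsilon>)"
    unfolding Z_def using \<open>0 \<le> \<epsilon>\<close>
    by (intro integral_sum_square_le[OF _ _ w q] second[unfolded q_def[symmetric] b_def[symmetric]]) auto
  have "b \<le> a"
    unfolding a_def b_def q_def by (rule integral_weighted_square_le[OF _ g]) simp
  have "3 / (2 * r) * (N * (a - \<epsilon>)) \<le> 3 / (2 * r) * (\<integral>\<omega>. Z \<omega> / sqrt (g \<omega> + 1) \<partial>M)"
    using first_moment r by (intro mult_left_mono) auto
  moreover have "1 / (2 * N * r) * (\<integral>\<omega>. (Z \<omega>)\<^sup>2 * q \<omega> \<partial>M) \<le> 1 / (2 * N * r) * (N * T\<^sup>2 + real N * real N * (b + 2 * \<epsilon>))"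
    using second_moment r by (intro mult_left_mono) auto
  moreover have "3 / (2 * r) * (N * (a - \<epsilon>)) = 3 / 2 * (r * a) - 3 / 2 * (r * \<epsilon>)"
    using r by (simp add: field_simps flip: r(2))
  moreover have "1 / (2 * N * r) * (N * T\<^sup>2 + real N * real N * (b + 2 * \<epsilon>)) = T\<^sup>2 / (2 * r) + r * b / 2 + r * \<epsilon>"
    using r by (simp add: field_simps flip: r(2))
  moreover have "sqrt N * (a - 5 / 2 * \<epsilon> - T\<^sup>2 / (2 * real N)) = r * a - 5 / 2 * (r * \<epsilon>) - T\<^sup>2 / (2 * r)"
    using r by (simp add: field_simps r_def[symmetric] flip: r(2))
  moreover have "r * b \<le> r * a" using \<open>b \<le> a\<close> r by simp
  moreover have "3 / (2 * r) * (\<integral>\<omega>. Z \<omega> / sqrt (g \<omega> + 1) \<partial>M)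
      - 1 / (2 * N * r) * (\<integral>\<omega>. (Z \<omega>)\<^sup>2 * q \<omega> \<partial>M) \<le> (\<integral>\<omega>. sqrt (Z \<omega>) \<partial>M)"
    unfolding r_def q_def by (rule integral_sqrt_ge_moments[OF _ _ _ Z N]) (use g in auto)
  ultimately have "sqrt N * (a - 5 / 2 * \<epsilon> - T\<^sup>2 / (2 * real N)) \<le> (\<integral>\<omega>. sqrt (Z \<omega>) \<partial>M)"
    by linarith
  then show ?thesis by (simp add: a_def Z_def)
qed

lemma exists_subseq_integral_sqrt_sum_ge:
  fixes W :: "nat \<Rightarrow> 'a \<Rightarrow> real" and g :: "'a \<Rightarrow> real" and n0 :: nat
  assumes [measurable]: "\<And>n. W n \<in> borel_measurable M" "g \<in> borel_measurable M"
    and W: "\<And>n \<omega>. \<omega> \<in> space M \<Longrightarrow> 0 \<le> W n \<omega> \<and> W n \<omega> \<le> T"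
    and g: "\<And>\<omega>. \<omega> \<in> space M \<Longrightarrow> 0 \<le> g \<omega> \<and> g \<omega> \<le> T" and "0 < \<epsilon>"
  defines "q \<equiv> \<lambda>\<omega>. 1 / ((g \<omega> + 1) * sqrt (g \<omega> + 1))"
    and "a \<equiv> \<integral>\<omega>. g \<omega> / sqrt (g \<omega> + 1) \<partial>M"
  assumes lim1: "(\<lambda>n. \<integral>\<omega>. W n \<omega> / sqrt (g \<omega> + 1) \<partial>M) \<longlonglongrightarrow> a"
    and lim2: "(\<lambda>n. \<integral>\<omega>. W n \<omega> * (g \<omega> * q \<omega>) \<partial>M) \<longlonglongrightarrow> (\<integral>\<omega>. (g \<omega>)\<^sup>2 * q \<omega> \<partial>M)"
    and lim3: "\<And>i. (\<lambda>n. \<integral>\<omega>. W n \<omega> * (W i \<omega> * q \<omega>) \<partial>M) \<longlonglongrightarrow> (\<integral>\<omega>. W i \<omega> * (g \<omega> * q \<omega>) \<partial>M)"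
  shows "\<exists>s :: nat \<Rightarrow> nat. strict_mono s \<and> (\<forall>k. n0 \<le> s k) \<and> (\<forall>N\<ge>1.
     sqrt N * (a - 5 / 2 * \<epsilon> - T\<^sup>2 / (2 * real N)) \<le> (\<integral>\<omega>. sqrt (\<Sum>k<N. W (s k) \<omega>) \<partial>M))"
proof -
  define b where "b = (\<integral>\<omega>. (g \<omega>)\<^sup>2 * q \<omega> \<partial>M)"
  define E1 where "E1 n = (\<integral>\<omega>. W n \<omega> / sqrt (g \<omega> + 1) \<partial>M)" for n
  define E2 where "E2 n = (\<integral>\<omega>. W n \<omega> * (g \<omega> * q \<omega>) \<partial>M)" for n
  define E3 where "E3 i n = (\<integral>\<omega>. W n \<omega> * (W i \<omega> * q \<omega>) \<partial>M)" for i n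
  have "E3 i \<longlonglongrightarrow> E2 i" for i
    using lim3[of i] unfolding E3_def[abs_def] E2_def by (simp add: ac_simps)
  have "eventually (\<lambda>n. n0 \<le> n \<and> a - \<epsilon> < E1 n \<and> E2 n < b + \<epsilon>) sequentially"
    using eventually_ge_at_top order_tendstoD(1)[OF lim1, of "a - \<epsilon>"]
      order_tendstoD(2)[OF lim2, of "b + \<epsilon>"] \<open>0 < \<epsilon>\<close>
    by (auto intro: eventually_conj simp: E1_def E2_def b_def)
  moreover have "eventually (\<lambda>n. E3 i n < E2 i + \<epsilon>) sequentially" for i
    using order_tendstoD(2)[OF \<open>E3 i \<longlonglongrightarrow> E2 i\<close>, of "E2 i + \<epsilon>"] \<open>0 < \<epsilon>\<close> by simp
  ultimately obtain s :: "nat \<Rightarrow> nat" where s: "strict_mono s"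
    and P: "\<And>k. n0 \<le> s k \<and> a - \<epsilon> < E1 (s k) \<and> E2 (s k) < b + \<epsilon>"
    and Q: "\<And>i j. i < j \<Longrightarrow> E3 (s i) (s j) < E2 (s i) + \<epsilon>"
    using subseq_eventually_pairwise[of _ "\<lambda>i n. E3 i n < E2 i + \<epsilon>"] by blast
  have pair: "(\<integral>\<omega>. W (s i) \<omega> * W (s j) \<omega> * q \<omega> \<partial>M) < b + 2 * \<epsilon>" if "i \<noteq> j" for i j
  proof -
    have pair_less: "(\<integral>\<omega>. W (s i) \<omega> * W (s j) \<omega> * q \<omega> \<partial>M) < b + 2 * \<epsilon>" if "i < j" for i j
    proof -
      have "(\<integral>\<omega>. W (s i) \<omega> * W (s j) \<omega> * q \<omega> \<partial>M) = E3 (s i) (s j)"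
        by (simp add: E3_def ac_simps)
      also have "\<dots> < E2 (s i) + \<epsilon>" by (rule Q[OF that])
      also have "\<dots> < b + 2 * \<epsilon>" using P[of i] by simp
      finally show ?thesis .
    qed
    show ?thesis
    proof (cases "i < j")
      case False
      then have "j < i" using that by simp
      then show ?thesis using pair_less[of j i] by (simp add: ac_simps)
    qed (rule pair_less)
  qed
  have "sqrt N * (a - 5 / 2 * \<epsilon> - T\<^sup>2 / (2 * real N)) \<le> (\<integral>\<omega>. sqrt (\<Sum>k<N. W (s k) \<omega>) \<partial>M)"
    if "N \<ge> 1" for N :: nat
    unfolding a_def
  proof (rule integral_sqrt_sum_ge[OF _ _ g W that])
    show "(\<integral>\<omega>. g \<omega> / sqrt (g \<omega> + 1) \<partial>M) - \<epsilon> \<le> (\<integral>\<omega>. W (s k) \<omega> / sqrt (g \<omega> + 1) \<partial>M)" for k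
      using P[of k] by (simp add: E1_def a_def)
    show "(\<integral>\<omega>. W (s i) \<omega> * W (s j) \<omega> * (1 / ((g \<omega> + 1) * sqrt (g \<omega> + 1))) \<partial>M)
        \<le> (\<integral>\<omega>. (g \<omega>)\<^sup>2 * (1 / ((g \<omega> + 1) * sqrt (g \<omega> + 1))) \<partial>M) + 2 * \<epsilon>" if "i \<noteq> j" for i j
      using pair[OF that] by (simp add: q_def b_def)
  qed (use \<open>0 < \<epsilon>\<close> in auto)
  then show ?thesis using s P by blast
qed

lemma exists_integral_ge_of_tendsto_at_top:
  fixes f :: "nat \<Rightarrow> 'a \<Rightarrow> real"
  assumes [measurable]: "\<And>k. f k \<in> borel_measurable M" "B \<in> sets M"
    and nonneg: "\<And>k \<omega>. \<omega> \<in> space M \<Longrightarrow> 0 \<le> f k \<omega>" and int: "\<And>k. integrable M (f k)"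
    and "emeasure M B \<noteq> 0" and diverge: "\<And>\<omega>. \<omega> \<in> B \<Longrightarrow> filterlim (\<lambda>k. f k \<omega>) at_top sequentially"
  shows "\<exists>k. K \<le> (\<integral>\<omega>. f k \<omega> \<partial>M)"
proof -
  have "\<top> = (\<integral>\<^sup>+ \<omega>. \<top> * indicator B \<omega> \<partial>M)"
    using \<open>emeasure M B \<noteq> 0\<close> by (subst nn_integral_cmult_indicator) (auto simp: ennreal_top_mult)
  also have "\<dots> \<le> (\<integral>\<^sup>+ \<omega>. liminf (\<lambda>k. ennreal (f k \<omega>)) \<partial>M)"
  proof (intro nn_integral_mono)
    fix \<omega> show "\<top> * indicator B \<omega> \<le> liminf (\<lambda>k. ennreal (f k \<omega>))"
    proof (cases "\<omega> \<in> B")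
      case True
      then have "liminf (\<lambda>k. ennreal (f k \<omega>)) = \<top>"
        using diverge by (intro lim_imp_Liminf) (simp_all add: ennreal_tendsto_top_eq_at_top)
      then show ?thesis by simp
    qed simp
  qed
  also have "\<dots> \<le> liminf (\<lambda>k. \<integral>\<^sup>+ \<omega>. ennreal (f k \<omega>) \<partial>M)"
    by (rule nn_integral_liminf) measurable
  finally have "\<forall>\<^sub>F k in sequentially. ennreal K < (\<integral>\<^sup>+ \<omega>. ennreal (f k \<omega>) \<partial>M)"
    by (simp add: top_unique le_Liminf_iff)
  then obtain k where "ennreal K < (\<integral>\<^sup>+ \<omega>. ennreal (f k \<omega>) \<partial>M)"
    by (auto dest: eventually_happens)
  also have "\<dots> = ennreal (\<integral>\<omega>. f k \<omega> \<partial>M)"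
    using int nonneg by (intro nn_integral_eq_integral) auto
  finally have "ennreal K < ennreal (\<integral>\<omega>. f k \<omega> \<partial>M)" .
  moreover have "0 \<le> (\<integral>\<omega>. f k \<omega> \<partial>M)" using nonneg by (intro integral_nonneg_AE) auto
  ultimately have "K \<le> (\<integral>\<omega>. f k \<omega> \<partial>M)" by (cases "0 \<le> K") (auto simp: ennreal_less_iff)
  then show ?thesis ..
qed

lemma nn_integral_abs_le_Lp_pow:
  assumes "1 \<le> p" "f \<in> borel_measurable M"
  shows "(\<integral>\<^sup>+ x. ennreal \<bar>f x\<bar> \<partial>M) \<le> 1 + Lp_pow M p f"
proof -
  have "\<bar>y\<bar> \<le> 1 + \<bar>y\<bar> powr p" for y :: real
  proof (cases "\<bar>y\<bar> \<le> 1")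
    case False
    then have "\<bar>y\<bar> powr 1 \<le> \<bar>y\<bar> powr p" using assms(1) by (intro powr_mono) auto
    then show ?thesis using False by simp
  qed (simp add: add_increasing2)
  then have "(\<integral>\<^sup>+ x. ennreal \<bar>f x\<bar> \<partial>M) \<le> (\<integral>\<^sup>+ x. 1 + ennreal (\<bar>f x\<bar> powr p) \<partial>M)"
  proof (intro nn_integral_mono)
    fix x
    have "ennreal \<bar>f x\<bar> \<le> ennreal (1 + \<bar>f x\<bar> powr p)" by (rule ennreal_leI) fact
    then show "ennreal \<bar>f x\<bar> \<le> 1 + ennreal (\<bar>f x\<bar> powr p)" by simp
  qed
  also have "\<dots> = 1 + Lp_pow M p f"
    unfolding Lp_pow_def using assms(2) by (subst nn_integral_add) (auto simp: emeasure_space_1)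
  finally show ?thesis .
qed

lemma integrable_of_Lp_pow:
  assumes "1 \<le> p" "f \<in> borel_measurable M" "Lp_pow M p f < \<infinity>"
  shows "integrable M f"
  using nn_integral_abs_le_Lp_pow[OF assms(1,2)] assms(2,3)
  by (intro integrableI_bounded) (auto intro: le_less_trans)

lemma integral_abs_le_of_Lp_pow:
  assumes "1 \<le> p" "f \<in> borel_measurable M" "Lp_pow M p f \<le> ennreal C" "0 \<le> C"
  shows "(\<integral>x. \<bar>f x\<bar> \<partial>M) \<le> 1 + C"
proof -
  have "integrable M f"
    using assms by (intro integrable_of_Lp_pow) (auto intro: le_less_trans)
  then have "ennreal (\<integral>x. \<bar>f x\<bar> \<partial>M) = (\<integral>\<^sup>+ x. ennreal \<bar>f x\<bar> \<partial>M)"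
    by (intro nn_integral_eq_integral[symmetric]) auto
  also have "\<dots> \<le> ennreal (1 + C)"
    using nn_integral_abs_le_Lp_pow[OF assms(1,2)] assms(3,4)
    by (auto intro: order_trans add_left_mono)
  finally show ?thesis using assms(4) by (subst (asm) ennreal_le_iff) auto
qed

lemma integral_abs_le_of_Lp_pow_scaled:
  fixes S :: "'a \<Rightarrow> real" and N :: nat
  assumes "1 \<le> p" "S \<in> borel_measurable M" "N \<ge> 1"
    and "Lp_pow M p (\<lambda>x. S x / sqrt N) \<le> ennreal C" "0 \<le> C"
  shows "(\<integral>x. \<bar>S x\<bar> \<partial>M) \<le> sqrt N * (1 + C)"
proof -
  have "(\<integral>x. \<bar>S x\<bar> \<partial>M) = sqrt N * (\<integral>x. \<bar>S x / sqrt N\<bar> \<partial>M)"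
    using assms(3) by simp
  also have "\<dots> \<le> sqrt N * (1 + C)"
    using assms by (intro mult_left_mono integral_abs_le_of_Lp_pow) auto
  finally show ?thesis .
qed

end

section \<open>Determining sequences and their limit random measure\<close>

locale determining_sequence = prob_space M for M :: "'a measure" +
  fixes X :: "nat \<Rightarrow> 'a \<Rightarrow> real" and \<mu> :: "'a \<Rightarrow> real measure"
  assumes determining: "determining M X" and limit_measure: "limit_random_measure M X \<mu>"
begin

lemma measurable_X [measurable]: "X n \<in> borel_measurable M"
  using determining unfolding determining_def by auto

lemma measurable_\<mu> [measurable]: "\<mu> \<in> M \<rightarrow>\<^sub>M prob_algebra borel"
  using limit_measure unfolding limit_random_measure_def by auto

lemma measurable_\<mu>_subprob [measurable]: "\<mu> \<in> M \<rightarrow>\<^sub>M subprob_algebra borel"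
  using measurable_\<mu> by (rule measurable_prob_algebraD)

lemma prob_space_\<mu>: "\<omega> \<in> space M \<Longrightarrow> prob_space (\<mu> \<omega>)"
  using measurable_space[OF measurable_\<mu>] by (auto simp: space_prob_algebra)

lemma sets_\<mu>: "\<omega> \<in> space M \<Longrightarrow> sets (\<mu> \<omega>) = sets borel"
  using measurable_space[OF measurable_\<mu>] by (auto simp: space_prob_algebra)

lemma measurable_integral_\<mu> [measurable]:
  fixes f :: "real \<Rightarrow> real"
  shows "f \<in> borel_measurable borel \<Longrightarrow> (\<lambda>\<omega>. \<integral>y. f y \<partial>\<mu> \<omega>) \<in> borel_measurable M"
  by (rule measurable_compose[OF measurable_\<mu>_subprob integral_measurable_subprob_algebra])

lemma abs_integral_\<mu>_le:
  fixes f :: "real \<Rightarrow> real"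
  assumes "\<omega> \<in> space M" "f \<in> borel_measurable borel" "\<And>x. \<bar>f x\<bar> \<le> B"
  shows "\<bar>\<integral>y. f y \<partial>\<mu> \<omega>\<bar> \<le> B"
proof -
  interpret P: prob_space "\<mu> \<omega>" by (rule prob_space_\<mu>[OF assms(1)])
  have "f \<in> borel_measurable (\<mu> \<omega>)"
    using assms(2) measurable_cong_sets[OF sets_\<mu>[OF assms(1)] refl] by auto
  then have "\<bar>\<integral>y. f y \<partial>\<mu> \<omega>\<bar> \<le> (\<integral>y. B \<partial>\<mu> \<omega>)"
    using assms order_trans[OF abs_ge_zero assms(3)]
    by (intro integral_abs_bound_integral P.integrable_const_bound[where B=B]) auto
  then show ?thesis by (simp add: P.prob_space)
qed

context
  fixes A assumes A [measurable]: "A \<in> sets M" and A_pos: "measure M A > 0"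
begin

private lemma prob_space_uniform: "prob_space (uniform_measure M A)"
  using A_pos by (intro prob_space_uniform_measure) (auto simp: emeasure_eq_measure)

lemma real_distribution_mixture: "real_distribution (uniform_measure M A \<bind> \<mu>)"
proof -
  have U: "uniform_measure M A \<in> space (prob_algebra M)"
    using prob_space_uniform by (simp add: space_prob_algebra)
  show ?thesis
    using prob_space_bind'[OF U measurable_\<mu>] sets_bind'[OF U measurable_\<mu>]
    by (simp add: real_distribution_def real_distribution_axioms_def)
qed

lemma cdf_mixture:
  "cdf (uniform_measure M A \<bind> \<mu>) t = (\<integral>\<omega>. indicator A \<omega> * measure (\<mu> \<omega>) {..t} \<partial>M) / measure M A"
proof -
  interpret U: prob_space "uniform_measure M A" by (rule prob_space_uniform)
  interpret \<nu>: real_distribution "uniform_measure M A \<bind> \<mu>" by (rule real_distribution_mixture)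
  have \<mu>_U: "\<mu> \<in> uniform_measure M A \<rightarrow>\<^sub>M subprob_algebra borel"
    using measurable_\<mu>_subprob by (simp add: measurable_cong_sets[OF sets_uniform_measure refl])
  have "emeasure (uniform_measure M A \<bind> \<mu>) {..t} = (\<integral>\<^sup>+\<omega>. emeasure (\<mu> \<omega>) {..t} \<partial>uniform_measure M A)"
    by (rule emeasure_bind[OF _ \<mu>_U]) (auto simp: not_empty)
  also have "\<dots> = ennreal (\<integral>\<omega>. measure (\<mu> \<omega>) {..t} \<partial>uniform_measure M A)"
    by (subst nn_integral_eq_integral[symmetric])
       (auto intro!: nn_integral_cong U.integrable_const_bound[where B=1]
         simp: finite_measure.emeasure_eq_measure[OF prob_space.finite_measure[OF prob_space_\<mu>]] prob_space.prob_le_1[OF prob_space_\<mu>])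
  finally have "cdf (uniform_measure M A \<bind> \<mu>) t = (\<integral>\<omega>. measure (\<mu> \<omega>) {..t} \<partial>uniform_measure M A)"
    by (simp add: cdf_def \<nu>.emeasure_eq_measure integral_nonneg_AE)
  also have "\<dots> = (\<integral>\<omega>. measure (\<mu> \<omega>) {..t} * indicator A \<omega> \<partial>M) / measure M A"
    by (rule integral_uniform_measure[OF A A_pos]) measurable
  finally show ?thesis by (simp add: mult.commute)
qed

lemma cdf_conditional_distr:
  "cdf (distr (uniform_measure M A) borel (X n)) t = measure M ({x \<in> space M. X n x \<le> t} \<inter> A) / measure M A"
proof -
  have "cdf (distr (uniform_measure M A) borel (X n)) t = measure (uniform_measure M A) {x \<in> space M. X n x \<le> t}"
    unfolding cdf_def by (subst measure_distr) (auto simp: vimage_def Int_def conj_commute)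
  also have "\<dots> = measure M ({x \<in> space M. X n x \<le> t} \<inter> A) / measure M A"
    using A_pos by (subst measure_uniform_measure) (auto simp: emeasure_eq_measure Int_commute)
  finally show ?thesis .
qed

text \<open>The cdfs of both sides agree with \<open>F\<^sub>A\<close> off its countably many discontinuities, hence
  everywhere by right continuity.\<close>
lemma weak_conv_conditional_distr:
  "weak_conv_m (\<lambda>n. distr (uniform_measure M A) borel (X n)) (uniform_measure M A \<bind> \<mu>)"
proof -
  interpret \<nu>: real_distribution "uniform_measure M A \<bind> \<mu>" by (rule real_distribution_mixture)
  obtain F where F: "cond_limit_df M X A F"
    using determining A A_pos unfolding determining_def by auto
  then have df: "distribution_function F" by (simp add: cond_limit_df_def)
  have "F = cdf (uniform_measure M A \<bind> \<mu>)"
  proof (rule right_continuous_eq_off_countable[where D="{t. \<not> isCont F t}"])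
    show "continuous (at_right t) F" for t using df by (simp add: distribution_function_def)
    show "continuous (at_right t) (cdf (uniform_measure M A \<bind> \<mu>))" for t by (rule \<nu>.cdf_is_right_cont)
    show "countable {t. \<not> isCont F t}"
      using df by (intro mono_ctble_discont) (simp add: distribution_function_def)
    show "F s = cdf (uniform_measure M A \<bind> \<mu>) s" if "s \<notin> {t. \<not> isCont F t}" for s
      using that limit_measure F A A_pos unfolding limit_random_measure_def cdf_mixture by auto
  qed
  then show ?thesis
    using F by (simp add: weak_conv_m_def weak_conv_def cond_limit_df_def cdf_conditional_distr)
qed

lemma tendsto_integral_indicator_pos:
  fixes f :: "real \<Rightarrow> real"
  assumes f: "\<And>x. isCont f x" "\<And>x. \<bar>f x\<bar> \<le> B"
  shows "(\<lambda>n. \<integral>\<omega>. f (X n \<omega>) * indicator A \<omega> \<partial>M) \<longlonglongrightarrow> (\<integral>\<omega>. (\<integral>y. f y \<partial>\<mu> \<omega>) * indicator A \<omega> \<partial>M)"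
proof -
  interpret U: prob_space "uniform_measure M A" by (rule prob_space_uniform)
  have [measurable]: "f \<in> borel_measurable borel"
    using f(1) by (intro borel_measurable_continuous_onI continuous_at_imp_continuous_on) auto
  have \<mu>_U: "\<mu> \<in> uniform_measure M A \<rightarrow>\<^sub>M subprob_algebra borel"
    using measurable_\<mu>_subprob by (simp add: measurable_cong_sets[OF sets_uniform_measure refl])
  have "(\<lambda>n. integral\<^sup>L (distr (uniform_measure M A) borel (X n)) f) \<longlonglongrightarrow> integral\<^sup>L (uniform_measure M A \<bind> \<mu>) f"
    using f by (intro weak_conv_imp_integral_bdd_continuous_conv[OF _ real_distribution_mixture
        weak_conv_conditional_distr]) (auto simp: real_distribution_def real_distribution_axioms_def
        intro!: U.prob_space_distr)
  moreover have "integral\<^sup>L (distr (uniform_measure M A) borel (X n)) f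
      = (\<integral>\<omega>. f (X n \<omega>) * indicator A \<omega> \<partial>M) / measure M A" for n
    by (subst integral_distr) (auto intro!: integral_uniform_measure[OF A A_pos])
  moreover have "integral\<^sup>L (uniform_measure M A \<bind> \<mu>) f
      = (\<integral>\<omega>. (\<integral>y. f y \<partial>\<mu> \<omega>) * indicator A \<omega> \<partial>M) / measure M A"
  proof -
    have "integral\<^sup>L (uniform_measure M A \<bind> \<mu>) f = (\<integral>\<omega>. (\<integral>y. f y \<partial>\<mu> \<omega>) \<partial>uniform_measure M A)"
      using f by (intro integral_bind[OF _ _ \<mu>_U, where B=B and B'=1])
        (auto simp: prob_space.emeasure_space_1[OF prob_space_\<mu>])
    then show ?thesis by (simp add: integral_uniform_measure[OF A A_pos])
  qed
  ultimately have "(\<lambda>n. (\<integral>\<omega>. f (X n \<omega>) * indicator A \<omega> \<partial>M) / measure M A)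
      \<longlonglongrightarrow> (\<integral>\<omega>. (\<integral>y. f y \<partial>\<mu> \<omega>) * indicator A \<omega> \<partial>M) / measure M A"
    by simp
  from tendsto_mult_right[OF this, of "measure M A"] show ?thesis using A_pos by simp
qed

end

lemma tendsto_integral_indicator:
  fixes f :: "real \<Rightarrow> real"
  assumes A [measurable]: "A \<in> sets M" and f: "\<And>x. isCont f x" "\<And>x. \<bar>f x\<bar> \<le> B"
  shows "(\<lambda>n. \<integral>\<omega>. f (X n \<omega>) * indicator A \<omega> \<partial>M) \<longlonglongrightarrow> (\<integral>\<omega>. (\<integral>y. f y \<partial>\<mu> \<omega>) * indicator A \<omega> \<partial>M)"
proof (cases "measure M A > 0")
  case True
  then show ?thesis using tendsto_integral_indicator_pos[OF A _ f] by blast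
next
  case False
  then have "AE \<omega> in M. \<omega> \<notin> A"
    using A by (intro AE_not_in) (auto simp: null_sets_def emeasure_eq_measure intro: antisym)
  then have "(\<integral>\<omega>. h \<omega> * indicator A \<omega> \<partial>M) = 0" for h :: "'a \<Rightarrow> real"
    by (intro integral_eq_zero_AE) auto
  then show ?thesis by simp
qed

lemma tendsto_integral_mult:
  fixes f :: "real \<Rightarrow> real" and \<psi> :: "'a \<Rightarrow> real"
  assumes f: "\<And>x. isCont f x" "\<And>x. \<bar>f x\<bar> \<le> B"
    and [measurable]: "\<psi> \<in> borel_measurable M" and \<psi>: "\<And>\<omega>. \<omega> \<in> space M \<Longrightarrow> 0 \<le> \<psi> \<omega> \<and> \<psi> \<omega> \<le> C"
  shows "(\<lambda>n. \<integral>\<omega>. f (X n \<omega>) * \<psi> \<omega> \<partial>M) \<longlonglongrightarrow> (\<integral>\<omega>. (\<integral>y. f y \<partial>\<mu> \<omega>) * \<psi> \<omega> \<partial>M)"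
proof (rule tendsto_integral_mult_of_indicator[OF _ _ _ _ _ \<psi> tendsto_integral_indicator[OF _ f]])
  have [measurable]: "f \<in> borel_measurable borel"
    using f(1) by (intro borel_measurable_continuous_onI continuous_at_imp_continuous_on) auto
  show "(\<lambda>\<omega>. f (X n \<omega>)) \<in> borel_measurable M" "(\<lambda>\<omega>. \<integral>y. f y \<partial>\<mu> \<omega>) \<in> borel_measurable M" for n
    by measurable
  show "\<bar>\<integral>y. f y \<partial>\<mu> \<omega>\<bar> \<le> B" if "\<omega> \<in> space M" for \<omega>
    by (rule abs_integral_\<mu>_le[OF that _ f(2)]) measurable
qed (use f in auto)

definition trunc_moment :: "real \<Rightarrow> 'a \<Rightarrow> real" where
  "trunc_moment T \<omega> = (\<integral>y. min (y\<^sup>2) T \<partial>\<mu> \<omega>)"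

lemma measurable_trunc_moment [measurable]: "trunc_moment T \<in> borel_measurable M"
  unfolding trunc_moment_def by measurable

lemma trunc_moment_bounds:
  assumes "\<omega> \<in> space M" "0 \<le> T"
  shows "0 \<le> trunc_moment T \<omega> \<and> trunc_moment T \<omega> \<le> T"
  using abs_integral_\<mu>_le[OF assms(1), of "\<lambda>y. min (y\<^sup>2) T" T] assms(2)
  by (auto simp: trunc_moment_def intro: integral_nonneg_AE)

lemma exists_subseq_integral_sqrt_trunc_sum_ge:
  fixes T \<epsilon> :: real and n0 :: nat
  assumes "0 \<le> T" "0 < \<epsilon>"
  defines "a \<equiv> \<integral>\<omega>. trunc_moment T \<omega> / sqrt (trunc_moment T \<omega> + 1) \<partial>M"
  shows "\<exists>s :: nat \<Rightarrow> nat. strict_mono s \<and> (\<forall>k. n0 \<le> s k) \<and> (\<forall>N\<ge>1.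
     sqrt N * (a - 5 / 2 * \<epsilon> - T\<^sup>2 / (2 * real N)) \<le> (\<integral>\<omega>. sqrt (\<Sum>k<N. min ((X (s k) \<omega>)\<^sup>2) T) \<partial>M))"
proof -
  define w where "w y = min (y\<^sup>2) T" for y :: real
  define G where "G = trunc_moment T"
  define q where "q \<omega> = 1 / ((G \<omega> + 1) * sqrt (G \<omega> + 1))" for \<omega>
  have w: "isCont w x" "\<bar>w x\<bar> \<le> T" "0 \<le> w x \<and> w x \<le> T" for x
    using \<open>0 \<le> T\<close> unfolding w_def by (intro continuous_intros | simp)+
  have G: "0 \<le> G \<omega> \<and> G \<omega> \<le> T" if "\<omega> \<in> space M" for \<omega>
    using trunc_moment_bounds[OF that \<open>0 \<le> T\<close>] by (simp add: G_def)
  have G_eq: "(\<integral>y. w y \<partial>\<mu> \<omega>) = G \<omega>" for \<omega> by (simp add: G_def trunc_moment_def w_def)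
  have [measurable]: "G \<in> borel_measurable M" "q \<in> borel_measurable M" "w \<in> borel_measurable borel"
    unfolding G_def q_def w_def by measurable
  have q: "0 \<le> q \<omega> \<and> q \<omega> \<le> 1" if "\<omega> \<in> space M" for \<omega>
  proof -
    have "1 * 1 \<le> (G \<omega> + 1) * sqrt (G \<omega> + 1)" using G[OF that] by (intro mult_mono) auto
    then show ?thesis using G[OF that] by (simp add: q_def)
  qed
  have p: "0 \<le> 1 / sqrt (G \<omega> + 1) \<and> 1 / sqrt (G \<omega> + 1) \<le> 1" if "\<omega> \<in> space M" for \<omega>
    using G[OF that] by simp
  have Gq: "0 \<le> G \<omega> * q \<omega> \<and> G \<omega> * q \<omega> \<le> T" if "\<omega> \<in> space M" for \<omega>
    using G[OF that] q[OF that] mult_mono[of "G \<omega>" T "q \<omega>" 1] by auto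
  have wq: "0 \<le> w (X i \<omega>) * q \<omega> \<and> w (X i \<omega>) * q \<omega> \<le> T" if "\<omega> \<in> space M" for i \<omega>
    using w(3) q[OF that] mult_mono[of "w (X i \<omega>)" T "q \<omega>" 1] \<open>0 \<le> T\<close> by auto
  have "\<exists>s :: nat \<Rightarrow> nat. strict_mono s \<and> (\<forall>k. n0 \<le> s k) \<and> (\<forall>N\<ge>1.
     sqrt N * (a - 5 / 2 * \<epsilon> - T\<^sup>2 / (2 * real N)) \<le> (\<integral>\<omega>. sqrt (\<Sum>k<N. w (X (s k) \<omega>)) \<partial>M))"
    unfolding a_def G_def[symmetric]
  proof (rule exists_subseq_integral_sqrt_sum_ge[OF _ _ w(3) G \<open>0 < \<epsilon>\<close>])
    show "(\<lambda>n. \<integral>\<omega>. w (X n \<omega>) / sqrt (G \<omega> + 1) \<partial>M) \<longlonglongrightarrow> (\<integral>\<omega>. G \<omega> / sqrt (G \<omega> + 1) \<partial>M)"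
      using tendsto_integral_mult[OF w(1,2) _ p] by (simp add: G_eq)
    show "(\<lambda>n. \<integral>\<omega>. w (X n \<omega>) * (G \<omega> * (1 / ((G \<omega> + 1) * sqrt (G \<omega> + 1)))) \<partial>M)
        \<longlonglongrightarrow> (\<integral>\<omega>. (G \<omega>)\<^sup>2 * (1 / ((G \<omega> + 1) * sqrt (G \<omega> + 1))) \<partial>M)"
      using tendsto_integral_mult[OF w(1,2) _ Gq] by (simp add: G_eq q_def power2_eq_square ac_simps)
    show "(\<lambda>n. \<integral>\<omega>. w (X n \<omega>) * (w (X i \<omega>) * (1 / ((G \<omega> + 1) * sqrt (G \<omega> + 1)))) \<partial>M)
        \<longlonglongrightarrow> (\<integral>\<omega>. w (X i \<omega>) * (G \<omega> * (1 / ((G \<omega> + 1) * sqrt (G \<omega> + 1)))) \<partial>M)" for i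
      using tendsto_integral_mult[OF w(1,2) _ wq] by (simp add: G_eq q_def ac_simps)
  qed measurable
  then show ?thesis by (simp add: w_def)
qed

lemma exists_finite_set_integral_abs_sum_ge:
  fixes K :: real and n0 :: nat
  assumes int: "\<And>n. integrable M (X n)"
    and unbounded: "\<And>K. \<exists>T\<ge>0. K \<le> (\<integral>\<omega>. trunc_moment T \<omega> / sqrt (trunc_moment T \<omega> + 1) \<partial>M)"
  shows "\<exists>F. finite F \<and> F \<noteq> {} \<and> (\<forall>n\<in>F. n0 \<le> n) \<and> K * sqrt (card F) \<le> (\<integral>\<omega>. \<bar>\<Sum>n\<in>F. X n \<omega>\<bar> \<partial>M)"
proof -
  define K' where "K' = max K 1"
  obtain T where "0 \<le> T"
    and T: "2 * sqrt 3 * K' + 1 \<le> (\<integral>\<omega>. trunc_moment T \<omega> / sqrt (trunc_moment T \<omega> + 1) \<partial>M)"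
    using unbounded by blast
  obtain s :: "nat \<Rightarrow> nat" where s: "strict_mono s" "\<And>k. n0 \<le> s k"
    and est: "\<And>N. N \<ge> 1 \<Longrightarrow> sqrt N * ((\<integral>\<omega>. trunc_moment T \<omega> / sqrt (trunc_moment T \<omega> + 1) \<partial>M)
        - 5 / 2 * (1 / 5) - T\<^sup>2 / (2 * real N)) \<le> (\<integral>\<omega>. sqrt (\<Sum>k<N. min ((X (s k) \<omega>)\<^sup>2) T) \<partial>M)"
    using exists_subseq_integral_sqrt_trunc_sum_ge[OF \<open>0 \<le> T\<close>, of "1 / 5" n0] by auto
  define N where "N = nat \<lceil>T\<^sup>2\<rceil> + 1"
  have "T\<^sup>2 \<le> real N" by (simp add: N_def) (smt (verit) le_of_int_ceiling)
  moreover have "N \<ge> 1" by (simp add: N_def)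
  ultimately have N: "N \<ge> 1" "T\<^sup>2 / (2 * real N) \<le> 1 / 2"
    by (simp_all add: field_simps)
  have "sqrt N * (2 * sqrt 3 * K') \<le> sqrt N * ((\<integral>\<omega>. trunc_moment T \<omega> / sqrt (trunc_moment T \<omega> + 1) \<partial>M)
        - 5 / 2 * (1 / 5) - T\<^sup>2 / (2 * real N))"
  proof (rule mult_left_mono)
    show "2 * sqrt 3 * K' \<le> (\<integral>\<omega>. trunc_moment T \<omega> / sqrt (trunc_moment T \<omega> + 1) \<partial>M)
        - 5 / 2 * (1 / 5) - T\<^sup>2 / (2 * real N)"
      using T N(2) by linarith
  qed simp
  also have "\<dots> \<le> (\<integral>\<omega>. sqrt (\<Sum>k<N. min ((X (s k) \<omega>)\<^sup>2) T) \<partial>M)"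
    by (rule est[OF N(1)])
  also have "\<dots> \<le> (\<integral>\<omega>. sqrt (\<Sum>k<N. (X (s k) \<omega>)\<^sup>2) \<partial>M)"
    using int \<open>0 \<le> T\<close> by (rule integral_sqrt_sum_min_le)
  finally have "2 * sqrt 3 * K' * sqrt N \<le> (\<integral>\<omega>. sqrt (\<Sum>k<N. (X (s k) \<omega>)\<^sup>2) \<partial>M)"
    by (simp only: mult.commute mult.left_commute)
  moreover have "0 < K'" by (simp add: K'_def)
  ultimately obtain F where F: "F \<subseteq> s ` {..<N}" "F \<noteq> {}"
    and F_big: "K' * sqrt (card F) \<le> (\<integral>\<omega>. \<bar>\<Sum>n\<in>F. X n \<omega>\<bar> \<partial>M)"
    using exists_finite_subset_integral_abs_sum_ge[where X=X, OF int s(1) _ N(1)] by blast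
  have "K * sqrt (card F) \<le> K' * sqrt (card F)"
    by (intro mult_right_mono) (auto simp: K'_def)
  moreover have "finite F" "\<forall>n\<in>F. n0 \<le> n" using finite_subset[OF F(1)] F(1) s(2) by auto
  ultimately show ?thesis
    using F(2) F_big by (intro exI[of _ F] conjI) auto
qed

lemma ennreal_trunc_moment:
  assumes "\<omega> \<in> space M" "0 \<le> T"
  shows "ennreal (trunc_moment T \<omega>) = (\<integral>\<^sup>+ y. ennreal (min (y\<^sup>2) T) \<partial>\<mu> \<omega>)"
proof -
  interpret P: prob_space "\<mu> \<omega>" by (rule prob_space_\<mu>[OF assms(1)])
  have "(\<lambda>y. min (y\<^sup>2) T) \<in> borel_measurable (\<mu> \<omega>)"
    by (simp add: measurable_cong_sets[OF sets_\<mu>[OF assms(1)] refl])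
  then show ?thesis
    unfolding trunc_moment_def using assms(2)
    by (intro nn_integral_eq_integral[symmetric] P.integrable_const_bound[where B=T]) auto
qed

lemma tendsto_trunc_moment_at_top:
  assumes "\<omega> \<in> space M" "(\<integral>\<^sup>+ y. ennreal (y\<^sup>2) \<partial>\<mu> \<omega>) = \<infinity>"
  shows "filterlim (\<lambda>k. trunc_moment (Suc k) \<omega>) at_top sequentially"
proof -
  have "(\<lambda>k. \<integral>\<^sup>+ y. ennreal (min (y\<^sup>2) (Suc k)) \<partial>\<mu> \<omega>) \<longlonglongrightarrow> (\<integral>\<^sup>+ y. ennreal (y\<^sup>2) \<partial>\<mu> \<omega>)"
  proof (rule nn_integral_LIMSEQ)
    show "incseq (\<lambda>k (y :: real). ennreal (min (y\<^sup>2) (Suc k)))"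
      by (auto simp: incseq_def le_fun_def intro!: ennreal_leI min.mono)
    show "(\<lambda>y. ennreal (min (y\<^sup>2) (Suc k))) \<in> borel_measurable (\<mu> \<omega>)" for k
      by (simp add: measurable_cong_sets[OF sets_\<mu>[OF assms(1)] refl])
    show "(\<lambda>k. ennreal (min (y\<^sup>2) (Suc k))) \<longlonglongrightarrow> ennreal (y\<^sup>2)" for y :: real
    proof (rule tendsto_eventually, rule eventually_sequentiallyI)
      fix k assume "nat \<lceil>y\<^sup>2\<rceil> \<le> k"
      then have "y\<^sup>2 \<le> real (Suc k)" by linarith
      then show "ennreal (min (y\<^sup>2) (Suc k)) = ennreal (y\<^sup>2)" by simp
    qed
  qed
  then have "(\<lambda>k. ennreal (trunc_moment (Suc k) \<omega>)) \<longlonglongrightarrow> \<top>"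
    using assms by (simp add: ennreal_trunc_moment)
  then show ?thesis by (simp add: ennreal_tendsto_top_eq_at_top)
qed

lemma trunc_moment_functional_unbounded:
  assumes "\<not> (AE \<omega> in M. (\<integral>\<^sup>+ y. ennreal (y\<^sup>2) \<partial>\<mu> \<omega>) < \<infinity>)"
  shows "\<exists>T\<ge>0. K \<le> (\<integral>\<omega>. trunc_moment T \<omega> / sqrt (trunc_moment T \<omega> + 1) \<partial>M)"
proof -
  have [measurable]: "(\<lambda>\<omega>. \<integral>\<^sup>+ y. ennreal (y\<^sup>2) \<partial>\<mu> \<omega>) \<in> borel_measurable M"
    by (rule measurable_compose[OF measurable_\<mu>_subprob nn_integral_measurable_subprob_algebra]) simp
  define B where "B = {\<omega> \<in> space M. (\<integral>\<^sup>+ y. ennreal (y\<^sup>2) \<partial>\<mu> \<omega>) = \<infinity>}"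
  have B [measurable]: "B \<in> sets M" unfolding B_def by measurable
  have "emeasure M B \<noteq> 0"
  proof
    assume "emeasure M B = 0"
    then have "AE \<omega> in M. \<omega> \<notin> B" using B by (intro AE_not_in) (simp add: null_sets_def)
    then have "AE \<omega> in M. (\<integral>\<^sup>+ y. ennreal (y\<^sup>2) \<partial>\<mu> \<omega>) < \<infinity>"
      using AE_space by eventually_elim (auto simp: B_def top.not_eq_extremum)
    with assms show False by simp
  qed
  define \<phi> where "\<phi> k \<omega> = trunc_moment (Suc k) \<omega> / sqrt (trunc_moment (Suc k) \<omega> + 1)" for k \<omega>
  have bounds: "0 \<le> \<phi> k \<omega> \<and> \<phi> k \<omega> \<le> Suc k" if "\<omega> \<in> space M" for k \<omega>
  proof -
    have "0 \<le> trunc_moment (Suc k) \<omega>" "trunc_moment (Suc k) \<omega> \<le> Suc k"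
      using trunc_moment_bounds[OF that, of "Suc k"] by auto
    moreover from this have "\<phi> k \<omega> \<le> trunc_moment (Suc k) \<omega>"
      by (auto simp: \<phi>_def divide_le_eq mult_le_cancel_left1)
    ultimately show ?thesis by (simp add: \<phi>_def)
  qed
  have "\<exists>k. K \<le> (\<integral>\<omega>. \<phi> k \<omega> \<partial>M)"
  proof (rule exists_integral_ge_of_tendsto_at_top[OF _ B _ _ \<open>emeasure M B \<noteq> 0\<close>])
    show [measurable]: "\<phi> k \<in> borel_measurable M" for k unfolding \<phi>_def by measurable
    show "0 \<le> \<phi> k \<omega>" if "\<omega> \<in> space M" for k \<omega> using bounds[OF that] by simp
    show "integrable M (\<phi> k)" for k
    proof (rule integrable_bounded)
      show "\<bar>\<phi> k \<omega>\<bar> \<le> Suc k" if "\<omega> \<in> space M" for \<omega> using bounds[OF that, of k] by simp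
    qed measurable
    show "filterlim (\<lambda>k. \<phi> k \<omega>) at_top sequentially" if "\<omega> \<in> B" for \<omega>
    proof (rule filterlim_at_top_mono)
      have "filterlim (\<lambda>k. trunc_moment (Suc k) \<omega>) at_top sequentially"
        using that by (intro tendsto_trunc_moment_at_top) (auto simp: B_def)
      then show "filterlim (\<lambda>k. -1 + sqrt (trunc_moment (Suc k) \<omega>)) at_top sequentially"
        by (intro filterlim_tendsto_add_at_top[OF tendsto_const] filterlim_compose[OF sqrt_at_top])
      show "\<forall>\<^sub>F k in sequentially. -1 + sqrt (trunc_moment (Suc k) \<omega>) \<le> \<phi> k \<omega>"
        using that sqrt_minus_one_le_div_sqrt trunc_moment_bounds
        by (auto simp: \<phi>_def B_def)
    qed
  qed
  then obtain k where "K \<le> (\<integral>\<omega>. \<phi> k \<omega> \<partial>M)" ..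
  then show ?thesis unfolding \<phi>_def by (intro exI[of _ "real (Suc k)"]) simp
qed

lemma exists_subseq_unbounded:
  assumes int: "\<And>n. integrable M (X n)"
    and "\<not> (AE \<omega> in M. (\<integral>\<^sup>+ y. ennreal (y\<^sup>2) \<partial>\<mu> \<omega>) < \<infinity>)"
  shows "\<exists>m :: nat \<Rightarrow> nat. strict_mono m \<and> (\<forall>C. \<exists>N\<ge>1. C * sqrt N < (\<integral>\<omega>. \<bar>\<Sum>k<N. X (m k) \<omega>\<bar> \<partial>M))"
  using exists_finite_set_integral_abs_sum_ge[OF int trunc_moment_functional_unbounded[OF assms(2)]]
  by (intro exists_subseq_integral_abs_sum_unbounded[where X=X, OF int]) blast

end

theorem mainTheorem9:
  fixes M :: "'a measure" and X :: "nat \<Rightarrow> 'a \<Rightarrow> real"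
    and \<mu> :: "'a \<Rightarrow> real measure" and p :: real
  assumes "prob_space M"
    and "1 \<le> p" and "p < 2"
    and "determining M X"
    and "(SUP n. Lp_pow M p (X n)) < \<infinity>"
    and "unif_integrable M (\<lambda>n x. \<bar>X n x\<bar> powr p)"
    and "weak_Lp_to_zero M p X"
    and "limit_random_measure M X \<mu>"
    and "\<forall>m :: nat \<Rightarrow> nat. strict_mono m \<longrightarrow>
           (SUP N \<in> {1..}. Lp_pow M p (\<lambda>x. (\<Sum>k<N. X (m k) x) / sqrt (real N))) < \<infinity>"
  shows "AE x in M. (\<integral>\<^sup>+ y. ennreal (y\<^sup>2) \<partial>\<mu> x) < \<infinity>"
proof (rule ccontr)
  assume not_AE: "\<not> ?thesis"
  interpret determining_sequence M X \<mu>
    using assms(1,4,8) by (simp add: determining_sequence_def determining_sequence_axioms_def)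
  have int: "integrable M (X n)" for n
    using le_less_trans[OF SUP_upper assms(5)] by (intro integrable_of_Lp_pow[OF assms(2)]) auto
  obtain m :: "nat \<Rightarrow> nat" where "strict_mono m"
    and unbounded: "\<And>C. \<exists>N\<ge>1. C * sqrt N < (\<integral>\<omega>. \<bar>\<Sum>k<N. X (m k) \<omega>\<bar> \<partial>M)"
    using exists_subseq_unbounded[OF int not_AE] by blast
  define C where "C = enn2real (SUP N \<in> {1..}. Lp_pow M p (\<lambda>x. (\<Sum>k<N. X (m k) x) / sqrt (real N)))"
  have C: "Lp_pow M p (\<lambda>x. (\<Sum>k<N. X (m k) x) / sqrt N) \<le> ennreal C" if "N \<ge> 1" for N
    using assms(9) \<open>strict_mono m\<close> that by (auto simp: C_def less_top intro: SUP_upper)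
  obtain N where "N \<ge> 1" and "(1 + C) * sqrt N < (\<integral>\<omega>. \<bar>\<Sum>k<N. X (m k) \<omega>\<bar> \<partial>M)"
    using unbounded by blast
  moreover have "(\<integral>\<omega>. \<bar>\<Sum>k<N. X (m k) \<omega>\<bar> \<partial>M) \<le> sqrt N * (1 + C)"
    using C[OF \<open>N \<ge> 1\<close>] by (intro integral_abs_le_of_Lp_pow_scaled[OF assms(2) _ \<open>N \<ge> 1\<close>]) (auto simp: C_def)
  ultimately show False by (simp add: mult.commute)
qed

end
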